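(* For every real number $\varepsilon>0$ there exists a set $S\subseteq\mathbb{Z}^{2}$ of lattice points in general position (no three points of $S$ lie on a common line) such that $$\left|S\cap[1,n]^{2}\right|=\Theta\!\left(\frac{n}{\log^{1+\varepsilon}n}\right).$$ In particular, $$\liminf_{n\to\infty}\frac{\left|S\cap[1,n]^{2}\right|}{n/\log^{1+\varepsilon}n}>0.$$
   Context: $[1,n]^2$ denotes the set of lattice points $(x,y)\in\mathbb{Z}^2$ with $1\le x,y\le n$. *)

theory Defs
  imports "HOL-Analysis.Analysis" "HOL-Library.Landau_Symbols"
begin

definition lat_pt :: "int \<times> int \<Rightarrow> real \<times> real" where
  "lat_pt p = (real_of_int (fst p), real_of_int (snd p))"

definition general_position :: "(int \<times> int) set \<Rightarrow> bool" where
  "general_position S \<longleftrightarrow>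
     (\<forall>p\<in>S. \<forall>q\<in>S. \<forall>r\<in>S. p \<noteq> q \<and> p \<noteq> r \<and> q \<noteq> r \<longrightarrow>
        \<not> collinear {lat_pt p, lat_pt q, lat_pt r})"

definition grid :: "nat \<Rightarrow> (int \<times> int) set" where
  "grid n = {1..int n} \<times> {1..int n}"

end

(*
  The set is built in dyadic stages. Stage k is a set in general position inside [1,2^k]^2, and
  the next stage adds about 2^(k+1)/(k+1)^a - 2^k/k^a points of the diagonal square
  (2^k, 2^(k+1)]^2. These are found by the deletion method: a uniformly random subset T of the
  square of the right size s contains few bad configurations (points collinear with two old
  points, pairs collinear with one old point, collinear triples), and deleting one point of each
  leaves at least s/2 points in general position together with the old set.

  The number of points of an N x N square on the line through a and b is at most
  N gcd(b - a) / |b - a|_inf + 1. Summing this density over pairs of old points gives a potential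
  that bounds the first kind of bad configuration; summing it over differences d with
  |d|_inf <= D gives O(D log D), which bounds the others and the growth of the potential. For
  a >= 1 all these expectations are o(s) at stage k, so for large k the block of the intended size
  exists, and the resulting set meets [1,n]^2 in Theta(n / log^a n) points.
*)
theory Submission
  imports Defs "HOL-Real_Asymp.Real_Asymp"
begin

section \<open>Lattice points on lines\<close>

definition int_collinear :: "int \<times> int \<Rightarrow> int \<times> int \<Rightarrow> int \<times> int \<Rightarrow> bool" where
  "int_collinear a b c \<longleftrightarrow> (fst b - fst a) * (snd c - snd a) = (snd b - snd a) * (fst c - fst a)"

lemma int_collinear_commute: "int_collinear b a c \<longleftrightarrow> int_collinear a b c"
  unfolding int_collinear_def by (rule iffI; algebra)

lemma int_collinear_swap: "int_collinear a c b \<longleftrightarrow> int_collinear a b c"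
  unfolding int_collinear_def by (rule iffI; algebra)

lemma int_collinear_if_collinear_lat_pt:
  assumes "collinear {lat_pt a, lat_pt b, lat_pt c}"
  shows "int_collinear a b c"
proof -
  have "{lat_pt a, lat_pt b, lat_pt c} = {lat_pt b, lat_pt a, lat_pt c}" by auto
  moreover have "collinear {lat_pt b, lat_pt a, lat_pt c} \<longleftrightarrow>
      collinear {0, lat_pt b - lat_pt a, lat_pt c - lat_pt a}"
    by (rule collinear_3) (simp add: NO_MATCH_def)
  ultimately have "collinear {0, lat_pt b - lat_pt a, lat_pt c - lat_pt a}"
    using assms by simp
  then consider "lat_pt b - lat_pt a = 0" | "lat_pt c - lat_pt a = 0"
    | t where "lat_pt c - lat_pt a = t *\<^sub>R (lat_pt b - lat_pt a)"
    unfolding collinear_lemma by blast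
  then show ?thesis
  proof cases
    case 3
    then have "real_of_int (fst c - fst a) = t * real_of_int (fst b - fst a)"
      and "real_of_int (snd c - snd a) = t * real_of_int (snd b - snd a)"
      by (auto simp: lat_pt_def prod_eq_iff)
    then have "real_of_int ((fst b - fst a) * (snd c - snd a)) =
        real_of_int ((snd b - snd a) * (fst c - fst a))"
      by (simp only: of_int_mult) (simp add: algebra_simps)
    then show ?thesis unfolding int_collinear_def by (simp only: of_int_eq_iff)
  qed (auto simp: int_collinear_def lat_pt_def prod_eq_iff)
qed

text \<open>The reciprocal of the sup-norm of the primitive lattice vector in direction \<open>b - a\<close>.\<close>
definition line_density :: "int \<times> int \<Rightarrow> int \<times> int \<Rightarrow> real" where
  "line_density a b = real_of_int (gcd (fst b - fst a) (snd b - snd a)) /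
     real_of_int (max \<bar>fst b - fst a\<bar> \<bar>snd b - snd a\<bar>)"

lemma line_density_nonneg: "line_density a b \<ge> 0"
  unfolding line_density_def by simp

lemma line_density_commute: "line_density b a = line_density a b"
proof -
  have "fst a - fst b = -(fst b - fst a)" "snd a - snd b = -(snd b - snd a)" by simp_all
  then show ?thesis
    unfolding line_density_def by (simp only: gcd_neg1_int gcd_neg2_int abs_minus_cancel)
qed

lemma card_le_if_pairwise_dvd_diff:
  fixes X :: "int set"
  assumes "u > 0" "lo \<le> hi" "X \<subseteq> {lo..hi}" "\<And>x y. x \<in> X \<Longrightarrow> y \<in> X \<Longrightarrow> u dvd x - y"
  shows "int (card X) \<le> (hi - lo) div u + 1"
proof (cases "X = {}")
  case True
  then show ?thesis using assms(1,2) by (simp add: pos_imp_zdiv_nonneg_iff)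
next
  case False
  have fin: "finite X" using assms(3) finite_subset by blast
  define m where "m = Min X"
  have m: "m \<in> X" "\<And>x. x \<in> X \<Longrightarrow> m \<le> x" using fin False by (simp_all add: m_def)
  define f where "f x = (x - m) div u" for x
  have "inj_on f X"
  proof (rule inj_onI)
    fix x y assume xy: "x \<in> X" "y \<in> X" "f x = f y"
    have "u dvd x - m" "u dvd y - m" using assms(4) xy m by auto
    then have "x - m = u * f x" "y - m = u * f y" unfolding f_def by simp_all
    then show "x = y" using xy(3) by simp
  qed
  moreover have "f ` X \<subseteq> {0..(hi - lo) div u}"
  proof
    fix z assume "z \<in> f ` X"
    then obtain x where x: "x \<in> X" "z = f x" by auto
    moreover have "x \<le> hi" "lo \<le> m" using x(1) m(1) assms(3) by auto
    ultimately have "0 \<le> x - m" "x - m \<le> hi - lo" using m(2) by auto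
    then show "z \<in> {0..(hi - lo) div u}"
      using assms(1) x(2) unfolding f_def by (auto intro: zdiv_mono1 pos_imp_zdiv_nonneg_iff[THEN iffD2])
  qed
  ultimately have "card X \<le> card {0..(hi - lo) div u}"
    by (metis card_image card_mono finite_atLeastAtMost_int)
  moreover have "0 \<le> (hi - lo) div u" using assms(1,2) by (simp add: pos_imp_zdiv_nonneg_iff)
  ultimately show ?thesis by simp
qed

lemma int_collinear_dvd_fst:
  assumes "int_collinear a b c" "fst b \<noteq> fst a"
  shows "(fst b - fst a) div gcd (fst b - fst a) (snd b - snd a) dvd fst c - fst a"
proof -
  define g where "g = gcd (fst b - fst a) (snd b - snd a)"
  define u where "u = (fst b - fst a) div g"
  define v where "v = (snd b - snd a) div g"
  have "g \<noteq> 0" using assms(2) unfolding g_def by simp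
  have "coprime u v" unfolding u_def v_def g_def using assms(2) by (intro div_gcd_coprime) auto
  have "fst b - fst a = g * u" "snd b - snd a = g * v" unfolding u_def v_def g_def by simp_all
  then have "g * (u * (snd c - snd a)) = g * (v * (fst c - fst a))"
    using assms(1) unfolding int_collinear_def by (metis mult.assoc)
  then have "u * (snd c - snd a) = v * (fst c - fst a)" using \<open>g \<noteq> 0\<close> by simp
  then have "u dvd v * (fst c - fst a)" by (metis dvd_triv_left)
  then show ?thesis using \<open>coprime u v\<close> unfolding u_def g_def by (simp add: coprime_dvd_mult_right_iff)
qed

text \<open>In the flat case the points of the line through \<open>a\<close> and \<open>b\<close> have distinct abscissae,
  spaced by \<open>\<bar>fst b - fst a\<bar> / gcd\<close>.\<close>
lemma card_collinear_in_strip_le: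
  fixes B :: "int set"
  assumes "a \<noteq> b" and flat: "\<bar>snd b - snd a\<bar> \<le> \<bar>fst b - fst a\<bar>"
  shows "real (card {c \<in> {x0+1..x0+int N} \<times> B. int_collinear a b c}) \<le> real N * line_density a b + 1"
proof (cases "N = 0")
  case False
  let ?X = "{c \<in> {x0+1..x0+int N} \<times> B. int_collinear a b c}"
  define g where "g = gcd (fst b - fst a) (snd b - snd a)"
  define u where "u = (fst b - fst a) div g"
  have dx0: "fst b \<noteq> fst a" using assms by (auto simp: prod_eq_iff)
  then have g0: "g > 0" unfolding g_def by simp
  have "fst b - fst a = g * u" unfolding u_def g_def by simp
  then have dx: "\<bar>fst b - fst a\<bar> = g * \<bar>u\<bar>" using g0 by (simp add: abs_mult)
  then have u0: "u \<noteq> 0" using dx0 by auto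
  have "inj_on fst ?X"
  proof (rule inj_onI)
    fix c d assume cd: "c \<in> ?X" "d \<in> ?X" "fst c = fst d"
    then have "(fst b - fst a) * (snd c - snd a) = (fst b - fst a) * (snd d - snd a)"
      unfolding int_collinear_def by simp
    then show "c = d" using cd(3) dx0 by (simp add: prod_eq_iff)
  qed
  then have card_eq: "card ?X = card (fst ` ?X)" by (rule card_image[symmetric])
  have "int (card (fst ` ?X)) \<le> (x0 + int N - (x0 + 1)) div \<bar>u\<bar> + 1"
  proof (rule card_le_if_pairwise_dvd_diff)
    fix x y assume "x \<in> fst ` ?X" "y \<in> fst ` ?X"
    then obtain c d where cd: "c \<in> ?X" "d \<in> ?X" "x = fst c" "y = fst d" by auto
    then have "u dvd (fst c - fst a) - (fst d - fst a)"
      using int_collinear_dvd_fst[OF _ dx0] unfolding u_def g_def by (blast intro: dvd_diff)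
    then show "\<bar>u\<bar> dvd x - y" using cd(3,4) by simp
  qed (use u0 False in auto)
  then have "real_of_int (int (card ?X)) \<le> real_of_int ((int N - 1) div \<bar>u\<bar> + 1)"
    using card_eq by (simp only: of_int_le_iff) simp
  then have "real (card ?X) \<le> real_of_int ((int N - 1) div \<bar>u\<bar>) + 1"
    by simp
  also have "real_of_int ((int N - 1) div \<bar>u\<bar>) \<le> real_of_int (int N - 1) / real_of_int \<bar>u\<bar>"
    by (rule real_of_int_div4)
  also have "\<dots> \<le> real N / \<bar>u\<bar>" using u0 by (simp add: divide_right_mono)
  also have "\<dots> = real N * line_density a b"
    using flat g0 u0 dx unfolding line_density_def g_def[symmetric] by (simp add: max_def)
  finally show ?thesis by simp
qed simp

lemma card_collinear_in_square_le:
  assumes "a \<noteq> b"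
  shows "real (card {c \<in> {x0+1..x0+int N} \<times> {y0+1..y0+int N}. int_collinear a b c})
    \<le> real N * line_density a b + 1"
proof (cases "\<bar>snd b - snd a\<bar> \<le> \<bar>fst b - fst a\<bar>")
  case True
  then show ?thesis using card_collinear_in_strip_le[OF assms] by blast
next
  case False
  have "int_collinear (prod.swap a) (prod.swap b) (prod.swap c) \<longleftrightarrow> int_collinear a b c" for c
    unfolding int_collinear_def by (auto simp: algebra_simps)
  then have "{c \<in> {x0+1..x0+int N} \<times> {y0+1..y0+int N}. int_collinear a b c} =
      prod.swap ` {c \<in> {y0+1..y0+int N} \<times> {x0+1..x0+int N}. int_collinear (prod.swap a) (prod.swap b) c}"
    by force
  moreover have "line_density (prod.swap a) (prod.swap b) = line_density a b"
    unfolding line_density_def by (simp add: gcd.commute max.commute)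
  moreover have "prod.swap a \<noteq> prod.swap b" using assms by (auto simp: prod_eq_iff)
  ultimately show ?thesis
    using card_collinear_in_strip_le[of "prod.swap a" "prod.swap b" y0 N "{x0+1..x0+int N}"] False
    by (simp add: card_image)
qed

definition linf_norm :: "int \<times> int \<Rightarrow> int" where
  "linf_norm d = max \<bar>fst d\<bar> \<bar>snd d\<bar>"

definition int_box :: "int \<Rightarrow> (int \<times> int) set" where
  "int_box M = {-M..M} \<times> {-M..M}"

lemma finite_int_box [simp]: "finite (int_box M)"
  by (simp add: int_box_def)

lemma card_int_box: "M \<ge> 0 \<Longrightarrow> card (int_box M) = nat (2 * M + 1) ^ 2"
  by (simp add: int_box_def card_cartesian_product power2_eq_square nat_mult_distrib)

text \<open>Each of the \<open>8 m\<close> lattice points of sup-norm \<open>m\<close> contributes \<open>1 / m\<close>.\<close>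
lemma sum_inverse_linf_norm_le:
  "(\<Sum>u\<in>int_box (int M) - {(0,0)}. 1 / real_of_int (linf_norm u)) \<le> 8 * real M"
proof (induction M)
  case 0
  have "int_box 0 = {(0,0)}" by (auto simp: int_box_def)
  then show ?case by simp
next
  case (Suc M)
  let ?f = "\<lambda>u. 1 / real_of_int (linf_norm u)"
  define shell where "shell = int_box (int (Suc M)) - int_box (int M)"
  have sub: "int_box (int M) \<subseteq> int_box (int (Suc M))" by (auto simp: int_box_def)
  have "card shell = (2 * M + 3)^2 - (2 * M + 1)^2"
    using sub unfolding shell_def
    by (simp add: card_Diff_subset card_int_box nat_add_distrib nat_mult_distrib add.commute)
  also have "\<dots> = 8 * M + 8" by (simp add: power2_eq_square algebra_simps)
  finally have card_shell: "card shell = 8 * M + 8" .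
  have "linf_norm u = int M + 1" if "u \<in> shell" for u
    using that unfolding shell_def int_box_def linf_norm_def by auto
  then have "(\<Sum>u\<in>shell. ?f u) = (8 * M + 8) * (1 / (real M + 1))"
    by (simp add: card_shell)
  also have "\<dots> = 8" by (simp add: field_simps)
  finally have shell_sum: "(\<Sum>u\<in>shell. ?f u) = 8" .
  have "int_box (int (Suc M)) - {(0,0)} = (int_box (int M) - {(0,0)}) \<union> shell"
    using sub unfolding shell_def by (auto simp: int_box_def)
  then have "(\<Sum>u\<in>int_box (int (Suc M)) - {(0,0)}. ?f u) =
      (\<Sum>u\<in>int_box (int M) - {(0,0)}. ?f u) + (\<Sum>u\<in>shell. ?f u)"
    by (simp only:) (rule sum.union_disjoint, auto simp: shell_def)
  then show ?case using Suc.IH shell_sum by simp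
qed

lemma harm_pow2_le: "harm (2 ^ K) \<le> (real K + 1 :: real)"
proof (induction K)
  case (Suc K)
  have "(\<Sum>t\<in>{2^K<..(2::nat)^Suc K}. inverse (real t)) \<le> (\<Sum>t\<in>{2^K<..(2::nat)^Suc K}. 1 / 2^K)"
    by (rule sum_mono) (simp add: frac_le inverse_eq_divide)
  also have "\<dots> = 1" by simp
  finally have "(\<Sum>t\<in>{2^K<..(2::nat)^Suc K}. inverse (real t)) \<le> 1" .
  moreover have "harm (2^Suc K) = harm (2^K) + (\<Sum>t\<in>{2^K<..(2::nat)^Suc K}. inverse (real t))"
  proof -
    have "{1..(2::nat)^Suc K} = {1..2^K} \<union> {2^K<..2^Suc K}" by auto
    then show ?thesis unfolding harm_def by (simp only:) (rule sum.union_disjoint, auto)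
  qed
  ultimately show ?case using Suc.IH by simp
qed (simp add: harm_def)

definition line_density_sum :: "int \<Rightarrow> real" where
  "line_density_sum D = (\<Sum>d\<in>int_box D - {(0,0)}. line_density (0,0) d)"

lemma line_density_sum_nonneg: "line_density_sum D \<ge> 0"
  unfolding line_density_sum_def by (intro sum_nonneg line_density_nonneg)

lemma line_density_sum_mono: "D \<le> D' \<Longrightarrow> line_density_sum D \<le> line_density_sum D'"
  unfolding line_density_sum_def
  by (rule sum_mono2) (auto simp: int_box_def intro: line_density_nonneg)

text \<open>Dividing out the gcd \<open>t\<close> turns the density into \<open>1 / linf_norm\<close> of a point of the smaller box.\<close>
lemma sum_line_density_gcd_eq_le:
  assumes "t > 0"
  shows "(\<Sum>d\<in>{d \<in> int_box (int D) - {(0,0)}. gcd (fst d) (snd d) = int t}. line_density (0,0) d)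
    \<le> 8 * (real D / real t)"
proof -
  define A where "A = {d \<in> int_box (int D) - {(0,0)}. gcd (fst d) (snd d) = int t}"
  define h where "h d = (fst d div int t, snd d div int t)" for d :: "int \<times> int"
  have scaled: "d = (int t * fst (h d), int t * snd (h d))" if "d \<in> A" for d
  proof -
    have "int t dvd fst d" "int t dvd snd d"
      using that unfolding A_def by (metis (mono_tags) mem_Collect_eq gcd_dvd1 gcd_dvd2)+
    then show ?thesis unfolding h_def by simp
  qed
  have small: "\<bar>q\<bar> \<le> int (D div t)" if "\<bar>int t * q\<bar> \<le> int D" for q
  proof -
    have "(\<bar>q\<bar> * int t) div int t \<le> int D div int t"
      using that assms by (intro zdiv_mono1) (auto simp: abs_mult mult.commute)
    then show ?thesis using assms by (simp add: zdiv_int)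
  qed
  have h_into: "h d \<in> int_box (int (D div t)) - {(0,0)}" if "d \<in> A" for d
  proof -
    have "\<bar>fst d\<bar> \<le> int D" "\<bar>snd d\<bar> \<le> int D" "d \<noteq> (0,0)"
      using that unfolding A_def int_box_def by auto
    moreover note scaled[OF that]
    ultimately have "\<bar>fst (h d)\<bar> \<le> int (D div t)" "\<bar>snd (h d)\<bar> \<le> int (D div t)"
      using small by (metis fst_conv snd_conv)+
    moreover have "h d \<noteq> (0,0)" using \<open>d \<noteq> (0,0)\<close> scaled[OF that] by auto
    ultimately show ?thesis unfolding int_box_def by (auto simp: abs_le_iff mem_Times_iff)
  qed
  have density: "line_density (0,0) d = 1 / real_of_int (linf_norm (h d))" if "d \<in> A" for d
  proof -
    have "gcd (fst d) (snd d) = int t" using that unfolding A_def by simp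
    moreover have "\<bar>fst d\<bar> = int t * \<bar>fst (h d)\<bar>" "\<bar>snd d\<bar> = int t * \<bar>snd (h d)\<bar>"
      using scaled[OF that] by (metis abs_mult abs_of_nat fst_conv snd_conv)+
    then have "max \<bar>fst d\<bar> \<bar>snd d\<bar> = int t * linf_norm (h d)"
      unfolding linf_norm_def by (simp add: max_mult_distrib_left)
    ultimately show ?thesis using assms unfolding line_density_def by simp
  qed
  have "inj_on h A" using scaled by (metis inj_onI)
  then have "(\<Sum>d\<in>A. line_density (0,0) d) = (\<Sum>u\<in>h ` A. 1 / real_of_int (linf_norm u))"
    by (simp add: sum.reindex density)
  also have "\<dots> \<le> (\<Sum>u\<in>int_box (int (D div t)) - {(0,0)}. 1 / real_of_int (linf_norm u))"
  proof (rule sum_mono2)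
    show "h ` A \<subseteq> int_box (int (D div t)) - {(0,0)}" using h_into by (simp add: image_subset_iff)
  qed (simp_all add: linf_norm_def)
  also have "\<dots> \<le> 8 * real (D div t)" by (rule sum_inverse_linf_norm_le)
  also have "\<dots> \<le> 8 * (real D / real t)" using of_nat_div_le_of_nat[of D t, where 'a=real] by simp
  finally show ?thesis unfolding A_def .
qed

lemma line_density_sum_le: "line_density_sum (int D) \<le> 8 * real D * harm D"
proof -
  define A where "A = int_box (int D) - {(0,0)}"
  define g where "g d = nat (gcd (fst d) (snd d))" for d :: "int \<times> int"
  have finA: "finite A" unfolding A_def by simp
  have gA: "g d \<in> {1..D}" if "d \<in> A" for d
  proof -
    have "0 < gcd (fst d) (snd d)" using that unfolding A_def by (cases d) auto
    moreover have "gcd (fst d) (snd d) \<le> max \<bar>fst d\<bar> \<bar>snd d\<bar>"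
      using \<open>0 < gcd (fst d) (snd d)\<close>
      by (cases "fst d = 0") (auto simp: max_def intro: gcd_le1_int[of "\<bar>fst d\<bar>", simplified]
        gcd_le2_int[of "\<bar>snd d\<bar>", simplified])
    moreover have "max \<bar>fst d\<bar> \<bar>snd d\<bar> \<le> int D" using that unfolding A_def int_box_def by auto
    moreover have "int (g d) = gcd (fst d) (snd d)" unfolding g_def by simp
    ultimately have "1 \<le> int (g d)" "int (g d) \<le> int D" by linarith+
    then show ?thesis by simp
  qed
  have "line_density_sum (int D) = (\<Sum>t\<in>{1..D}. \<Sum>d\<in>{d \<in> A. g d = t}. line_density (0,0) d)"
    unfolding line_density_sum_def A_def[symmetric]
    by (rule sum.group[symmetric, OF finA]) (use gA in auto)
  also have "\<dots> \<le> (\<Sum>t\<in>{1..D}. 8 * (real D / real t))"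
  proof (rule sum_mono)
    fix t assume "t \<in> {1..D}"
    moreover have "{d \<in> A. g d = t} = {d \<in> int_box (int D) - {(0,0)}. gcd (fst d) (snd d) = int t}"
      unfolding A_def g_def by (auto simp: nat_eq_iff)
    ultimately show "(\<Sum>d\<in>{d \<in> A. g d = t}. line_density (0,0) d) \<le> 8 * (real D / real t)"
      using sum_line_density_gcd_eq_le[of t D] by simp
  qed
  also have "\<dots> = 8 * real D * harm D"
    by (simp add: harm_def sum_distrib_left divide_inverse mult.assoc)
  finally show ?thesis .
qed

lemma sum_line_density_le:
  assumes "finite B" "\<And>c. c \<in> B \<Longrightarrow> linf_norm (c - a) \<le> D"
  shows "(\<Sum>c\<in>B - {a}. line_density a c) \<le> line_density_sum D"
proof -
  have "(\<Sum>c\<in>B - {a}. line_density a c) = (\<Sum>d\<in>(\<lambda>c. c - a) ` (B - {a}). line_density (0,0) d)"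
    by (subst sum.reindex) (auto simp: inj_on_def line_density_def)
  also have "\<dots> \<le> line_density_sum D"
    unfolding line_density_sum_def
  proof (rule sum_mono2)
    show "(\<lambda>c. c - a) ` (B - {a}) \<subseteq> int_box D - {(0,0)}"
      using assms(2) by (fastforce simp: linf_norm_def int_box_def prod_eq_iff)
  qed (auto intro: line_density_nonneg)
  finally show ?thesis .
qed

section \<open>Collinear configurations in a square\<close>

definition lattice_square :: "int \<Rightarrow> nat \<Rightarrow> (int \<times> int) set" where
  "lattice_square x0 N = {x0+1..x0+int N} \<times> {x0+1..x0+int N}"

lemma finite_lattice_square [simp]: "finite (lattice_square x0 N)"
  by (simp add: lattice_square_def)

lemma card_lattice_square: "card (lattice_square x0 N) = N^2"
  by (simp add: lattice_square_def card_cartesian_product power2_eq_square)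

lemma linf_norm_diff_le:
  "a \<in> lattice_square x0 N \<Longrightarrow> c \<in> lattice_square x0 N \<Longrightarrow> linf_norm (c - a) \<le> int N"
  unfolding lattice_square_def linf_norm_def by auto

definition pair_weight :: "(int \<times> int) set \<Rightarrow> real" where
  "pair_weight A = (\<Sum>(a, b)\<in>A \<times> A - Id. line_density a b)"

lemma pair_weight_nonneg: "pair_weight A \<ge> 0"
  unfolding pair_weight_def by (intro sum_nonneg) (auto intro: line_density_nonneg)

lemma pair_weight_mono: "finite T \<Longrightarrow> T' \<subseteq> T \<Longrightarrow> pair_weight T' \<le> pair_weight T"
  unfolding pair_weight_def by (rule sum_mono2) (auto intro: line_density_nonneg)

lemma pair_weight_Un:
  assumes "finite S" "finite T" "S \<inter> T = {}"
  shows "pair_weight (S \<union> T) = pair_weight S + pair_weight T + 2 * (\<Sum>a\<in>S. \<Sum>c\<in>T. line_density a c)"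
proof -
  let ?f = "\<lambda>(a, b). line_density a b"
  have "(S \<union> T) \<times> (S \<union> T) - Id = ((S \<times> S - Id) \<union> (T \<times> T - Id)) \<union> (S \<times> T \<union> T \<times> S)"
    using assms(3) by auto
  moreover have "(S \<times> S - Id) \<inter> (T \<times> T - Id) = {}" "S \<times> T \<inter> T \<times> S = {}"
    "((S \<times> S - Id) \<union> (T \<times> T - Id)) \<inter> (S \<times> T \<union> T \<times> S) = {}"
    using assms(3) by auto
  ultimately have "pair_weight (S \<union> T) = pair_weight S + pair_weight T + (sum ?f (S \<times> T) + sum ?f (T \<times> S))"
    unfolding pair_weight_def using assms(1,2) by (simp add: sum.union_disjoint)
  moreover have "sum ?f (T \<times> S) = sum ?f (S \<times> T)"
    by (rule sum.reindex_bij_witness[where i = prod.swap and j = prod.swap])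
      (auto simp: line_density_commute)
  moreover have "sum ?f (S \<times> T) = (\<Sum>a\<in>S. \<Sum>c\<in>T. line_density a c)"
    by (simp add: sum.cartesian_product)
  ultimately show ?thesis by simp
qed

lemma pair_weight_le:
  assumes "finite U" "\<And>a c. a \<in> U \<Longrightarrow> c \<in> U \<Longrightarrow> linf_norm (c - a) \<le> D"
  shows "pair_weight U \<le> real (card U) * line_density_sum D"
proof -
  have "U \<times> U - Id = Sigma U (\<lambda>a. U - {a})" by auto
  then have "pair_weight U = (\<Sum>a\<in>U. \<Sum>c\<in>U - {a}. line_density a c)"
    unfolding pair_weight_def using assms(1) by (simp add: sum.Sigma)
  also have "\<dots> \<le> (\<Sum>a\<in>U. line_density_sum D)"
    using assms by (intro sum_mono sum_line_density_le) auto
  finally show ?thesis by simp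
qed

definition collinear_with_two :: "(int \<times> int) set \<Rightarrow> (int \<times> int) set \<Rightarrow> (int \<times> int) set" where
  "collinear_with_two S T = {c \<in> T. \<exists>a\<in>S. \<exists>b\<in>S. a \<noteq> b \<and> int_collinear a b c}"

definition collinear_pairs_with ::
    "(int \<times> int) set \<Rightarrow> (int \<times> int) set \<Rightarrow> ((int \<times> int) \<times> (int \<times> int)) set" where
  "collinear_pairs_with S T = {(b, c) \<in> T \<times> T. b \<noteq> c \<and> (\<exists>a\<in>S. int_collinear a b c)}"

definition collinear_triples ::
    "(int \<times> int) set \<Rightarrow> ((int \<times> int) \<times> (int \<times> int) \<times> (int \<times> int)) set" where
  "collinear_triples T = {(a, b, c) \<in> T \<times> T \<times> T. a \<noteq> b \<and> a \<noteq> c \<and> b \<noteq> c \<and> int_collinear a b c}"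

lemma finite_collinear_pairs_with: "finite T \<Longrightarrow> finite (collinear_pairs_with S T)"
  unfolding collinear_pairs_with_def by (rule finite_subset[of _ "T \<times> T"]) auto

lemma finite_collinear_triples: "finite T \<Longrightarrow> finite (collinear_triples T)"
  unfolding collinear_triples_def by (rule finite_subset[of _ "T \<times> T \<times> T"]) auto

lemma collinear_with_two_restrict:
  "T \<subseteq> U \<Longrightarrow> collinear_with_two S T = {c \<in> collinear_with_two S U. {c} \<subseteq> T}"
  unfolding collinear_with_two_def by blast

lemma collinear_pairs_with_restrict:
  "T \<subseteq> U \<Longrightarrow> collinear_pairs_with S T = {p \<in> collinear_pairs_with S U. {fst p, snd p} \<subseteq> T}"
  unfolding collinear_pairs_with_def by auto

lemma collinear_triples_restrict:
  "T \<subseteq> U \<Longrightarrow>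
    collinear_triples T = {q \<in> collinear_triples U. {fst q, fst (snd q), snd (snd q)} \<subseteq> T}"
  unfolding collinear_triples_def by auto

lemma card_collinear_with_two_le:
  assumes "finite S"
  shows "real (card (collinear_with_two S (lattice_square x0 N))) \<le> real N * pair_weight S + real (card S) ^ 2"
proof -
  let ?Q = "lattice_square x0 N"
  let ?line = "\<lambda>(a, b). {c \<in> ?Q. int_collinear a b c}"
  have "collinear_with_two S ?Q \<subseteq> (\<Union>p\<in>S \<times> S - Id. ?line p)"
    unfolding collinear_with_two_def by auto
  then have "card (collinear_with_two S ?Q) \<le> card (\<Union>p\<in>S \<times> S - Id. ?line p)"
    using assms by (intro card_mono) auto
  also have "\<dots> \<le> (\<Sum>p\<in>S \<times> S - Id. card (?line p))"
    using assms by (intro card_UN_le) auto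
  finally have "real (card (collinear_with_two S ?Q)) \<le> (\<Sum>p\<in>S \<times> S - Id. real (card (?line p)))"
    by (simp flip: of_nat_sum)
  also have "\<dots> \<le> (\<Sum>(a, b)\<in>S \<times> S - Id. real N * line_density a b + 1)"
    unfolding lattice_square_def by (intro sum_mono) (auto intro: card_collinear_in_square_le)
  also have "\<dots> = real N * pair_weight S + real (card (S \<times> S - Id))"
    unfolding pair_weight_def by (simp add: split_beta sum.distrib sum_distrib_left)
  also have "card (S \<times> S - Id) \<le> card S ^ 2"
    using assms by (metis Diff_subset card_cartesian_product card_mono finite_cartesian_product power2_eq_square)
  finally show ?thesis by (simp flip: of_nat_power)
qed

lemma card_collinear_through_le:
  assumes "\<And>c. c \<in> lattice_square x0 N \<Longrightarrow> linf_norm (c - a) \<le> D"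
  shows "real (card {(b, c) \<in> lattice_square x0 N \<times> lattice_square x0 N. b \<noteq> a \<and> int_collinear a b c})
    \<le> real N * line_density_sum D + real N ^ 2"
proof -
  let ?Q = "lattice_square x0 N"
  have "{(b, c) \<in> ?Q \<times> ?Q. b \<noteq> a \<and> int_collinear a b c} = Sigma (?Q - {a}) (\<lambda>b. {c \<in> ?Q. int_collinear a b c})"
    by auto
  then have "real (card {(b, c) \<in> ?Q \<times> ?Q. b \<noteq> a \<and> int_collinear a b c}) =
      (\<Sum>b\<in>?Q - {a}. real (card {c \<in> ?Q. int_collinear a b c}))"
    by (simp add: card_SigmaI)
  also have "\<dots> \<le> (\<Sum>b\<in>?Q - {a}. real N * line_density a b + 1)"
    unfolding lattice_square_def by (intro sum_mono card_collinear_in_square_le) auto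
  also have "\<dots> = real N * (\<Sum>b\<in>?Q - {a}. line_density a b) + real (card (?Q - {a}))"
    by (simp add: sum.distrib sum_distrib_left)
  also have "\<dots> \<le> real N * line_density_sum D + real N ^ 2"
  proof (intro add_mono mult_left_mono)
    show "(\<Sum>b\<in>?Q - {a}. line_density a b) \<le> line_density_sum D"
      using assms by (intro sum_line_density_le) auto
    show "real (card (?Q - {a})) \<le> real N ^ 2"
      using card_mono[of ?Q "?Q - {a}"] card_lattice_square[of x0 N] by (simp flip: of_nat_power)
  qed simp
  finally show ?thesis .
qed

lemma card_collinear_pairs_with_le:
  assumes "finite S" "S \<inter> lattice_square x0 N = {}"
    and "\<And>a c. a \<in> S \<Longrightarrow> c \<in> lattice_square x0 N \<Longrightarrow> linf_norm (c - a) \<le> D"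
  shows "real (card (collinear_pairs_with S (lattice_square x0 N)))
    \<le> real (card S) * (real N * line_density_sum D + real N ^ 2)"
proof -
  let ?Q = "lattice_square x0 N"
  let ?through = "\<lambda>a. {(b, c) \<in> ?Q \<times> ?Q. b \<noteq> a \<and> int_collinear a b c}"
  have "collinear_pairs_with S ?Q \<subseteq> (\<Union>a\<in>S. ?through a)"
    using assms(2) unfolding collinear_pairs_with_def by blast
  moreover have "finite (?through a)" for a
    by (rule finite_subset[of _ "?Q \<times> ?Q"]) auto
  ultimately have "card (collinear_pairs_with S ?Q) \<le> card (\<Union>a\<in>S. ?through a)"
    using assms(1) by (intro card_mono) auto
  also have "\<dots> \<le> (\<Sum>a\<in>S. card (?through a))"
    using assms(1) by (rule card_UN_le)
  finally have "card (collinear_pairs_with S ?Q) \<le> (\<Sum>a\<in>S. card (?through a))" .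
  then have "real (card (collinear_pairs_with S ?Q)) \<le> (\<Sum>a\<in>S. real (card (?through a)))"
    by (simp flip: of_nat_sum)
  also have "\<dots> \<le> (\<Sum>a\<in>S. real N * line_density_sum D + real N ^ 2)"
    using assms(3) by (intro sum_mono card_collinear_through_le) auto
  finally show ?thesis by simp
qed

lemma card_collinear_triples_le:
  "real (card (collinear_triples (lattice_square x0 N)))
    \<le> real N ^ 2 * (real N * line_density_sum (int N) + real N ^ 2)"
proof -
  let ?Q = "lattice_square x0 N"
  let ?through = "\<lambda>a. {(b, c) \<in> ?Q \<times> ?Q. b \<noteq> a \<and> int_collinear a b c}"
  have fin: "finite (?through a)" for a
    by (rule finite_subset[of _ "?Q \<times> ?Q"]) auto
  have "collinear_triples ?Q \<subseteq> Sigma ?Q ?through"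
    unfolding collinear_triples_def by auto
  moreover have "finite (Sigma ?Q ?through)"
    using fin by (intro finite_SigmaI) auto
  ultimately have "card (collinear_triples ?Q) \<le> card (Sigma ?Q ?through)"
    by (intro card_mono)
  also have "\<dots> = (\<Sum>a\<in>?Q. card (?through a))"
    using fin by (intro card_SigmaI) auto
  finally have "real (card (collinear_triples ?Q)) \<le> (\<Sum>a\<in>?Q. real (card (?through a)))"
    by (simp flip: of_nat_sum)
  also have "\<dots> \<le> (\<Sum>a\<in>?Q. real N * line_density_sum (int N) + real N ^ 2)"
    by (intro sum_mono card_collinear_through_le linf_norm_diff_le)
  finally show ?thesis by (simp add: card_lattice_square)
qed

section \<open>Random subsets\<close>

lemma binomial_ratio_le:
  assumes "r \<le> s" "s \<le> n"
  shows "real ((n - r) choose (s - r)) * real n ^ r \<le> real (n choose s) * real s ^ r"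
  using assms(1)
proof (induction r)
  case (Suc r)
  have rs: "r < s" using Suc.prems by simp
  have nr: "real (n - r) > 0" using rs assms(2) by simp
  have "(s - r) * ((n - r) choose (s - r)) = (n - r) * ((n - r - 1) choose (s - r - 1))"
    using rs by (intro times_binomial_minus1_eq) simp
  then have "real (s - r) * real ((n - r) choose (s - r)) = real (n - r) * real ((n - r - 1) choose (s - r - 1))"
    by (metis of_nat_mult)
  then have step: "real ((n - Suc r) choose (s - Suc r)) = real ((n - r) choose (s - r)) * real (s - r) / real (n - r)"
    using nr by (simp add: field_simps)
  have "real r * real s \<le> real r * real n"
    using assms(2) by (intro mult_left_mono) auto
  then have "real n * real (s - r) \<le> real s * real (n - r)"
    using rs assms(2) by (simp add: of_nat_diff algebra_simps)
  then have ratio: "real n * real (s - r) / real (n - r) \<le> real s"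
    using nr by (simp add: field_simps)
  have "real ((n - Suc r) choose (s - Suc r)) * real n ^ Suc r
      = (real ((n - r) choose (s - r)) * real n ^ r) * (real n * real (s - r) / real (n - r))"
    unfolding step by (simp add: field_simps)
  also have "\<dots> \<le> (real (n choose s) * real s ^ r) * (real n * real (s - r) / real (n - r))"
    using Suc.IH rs nr by (intro mult_right_mono) auto
  also have "\<dots> \<le> (real (n choose s) * real s ^ r) * real s"
    using ratio by (intro mult_left_mono) auto
  finally show ?case by (simp add: mult_ac)
qed simp

lemma card_subsets_containing:
  assumes "finite U" "E \<subseteq> U" "card E \<le> s"
  shows "card {T. T \<subseteq> U \<and> card T = s \<and> E \<subseteq> T} = (card U - card E) choose (s - card E)"
proof -
  have finE: "finite E" using assms(1,2) finite_subset by blast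
  have "bij_betw (\<lambda>T. T - E) {T. T \<subseteq> U \<and> card T = s \<and> E \<subseteq> T} {T. T \<subseteq> U - E \<and> card T = s - card E}"
  proof (rule bij_betw_byWitness[where f' = "\<lambda>T. T \<union> E"])
    show "(\<lambda>T. T - E) ` {T. T \<subseteq> U \<and> card T = s \<and> E \<subseteq> T} \<subseteq> {T. T \<subseteq> U - E \<and> card T = s - card E}"
      using assms(1) finE by (auto simp: card_Diff_subset dest: finite_subset)
    show "(\<lambda>T. T \<union> E) ` {T. T \<subseteq> U - E \<and> card T = s - card E} \<subseteq> {T. T \<subseteq> U \<and> card T = s \<and> E \<subseteq> T}"
    proof clarify
      fix T assume T: "T \<subseteq> U - E" "card T = s - card E"
      then have "card (T \<union> E) = card T + card E"
        using assms(1) finE by (intro card_Un_disjoint) (auto dest: finite_subset)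
      then show "T \<union> E \<subseteq> U \<and> card (T \<union> E) = s \<and> E \<subseteq> T \<union> E" using T assms(2,3) by auto
    qed
  qed auto
  then have "card {T. T \<subseteq> U \<and> card T = s \<and> E \<subseteq> T} = card {T. T \<subseteq> U - E \<and> card T = s - card E}"
    by (rule bij_betw_same_card)
  also have "\<dots> = card (U - E) choose (s - card E)" using assms(1) by (intro n_subsets) simp
  finally show ?thesis using assms(2) finE by (simp add: card_Diff_subset)
qed

lemma card_subsets_containing_le:
  assumes "finite U" "E \<subseteq> U" "s \<le> card U"
  shows "real (card {T. T \<subseteq> U \<and> card T = s \<and> E \<subseteq> T}) * real (card U) ^ card E
    \<le> real (card {T. T \<subseteq> U \<and> card T = s}) * real s ^ card E"
proof (cases "card E \<le> s")
  case True
  then show ?thesis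
    using binomial_ratio_le[OF True assms(3)] card_subsets_containing[OF assms(1,2) True]
    by (simp add: n_subsets[OF assms(1)])
next
  case False
  then have empty: "{T. T \<subseteq> U \<and> card T = s \<and> E \<subseteq> T} = {}"
    using assms(1) by (auto dest: card_mono[rotated] finite_subset)
  show ?thesis unfolding empty by simp
qed

text \<open>A configuration of \<open>r\<close> points of an \<open>n\<close>-set lies in a uniformly random \<open>s\<close>-subset
  with probability at most \<open>(s/n)^r\<close>.\<close>
lemma sum_subsets_sum_contained_le:
  fixes el :: "'b \<Rightarrow> 'a set" and f :: "'b \<Rightarrow> real"
  assumes "finite U" "0 < card U" "s \<le> card U" "finite P"
    and "\<And>p. p \<in> P \<Longrightarrow> el p \<subseteq> U" "\<And>p. p \<in> P \<Longrightarrow> card (el p) = r" "\<And>p. p \<in> P \<Longrightarrow> 0 \<le> f p"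
  shows "(\<Sum>T\<in>{T. T \<subseteq> U \<and> card T = s}. \<Sum>p\<in>{p \<in> P. el p \<subseteq> T}. f p)
    \<le> real (card {T. T \<subseteq> U \<and> card T = s}) * (real s / real (card U)) ^ r * (\<Sum>p\<in>P. f p)"
proof -
  let ?TT = "{T. T \<subseteq> U \<and> card T = s}"
  have "(\<Sum>T\<in>?TT. \<Sum>p\<in>{p \<in> P. el p \<subseteq> T}. f p) = (\<Sum>T\<in>?TT. \<Sum>p\<in>P. if el p \<subseteq> T then f p else 0)"
    using assms(4) by (simp add: sum.inter_filter)
  also have "\<dots> = (\<Sum>p\<in>P. \<Sum>T\<in>?TT. if el p \<subseteq> T then f p else 0)"
    by (rule sum.swap)
  also have "\<dots> = (\<Sum>p\<in>P. f p * real (card {T. T \<subseteq> U \<and> card T = s \<and> el p \<subseteq> T}))"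
  proof (rule sum.cong[OF refl])
    fix p
    have "{T \<in> ?TT. el p \<subseteq> T} = {T. T \<subseteq> U \<and> card T = s \<and> el p \<subseteq> T}" by auto
    moreover have "finite ?TT" using assms(1) by (simp add: finite_Collect_subsets)
    ultimately show "(\<Sum>T\<in>?TT. if el p \<subseteq> T then f p else 0) = f p * real (card {T. T \<subseteq> U \<and> card T = s \<and> el p \<subseteq> T})"
      by (simp flip: sum.inter_filter)
  qed
  also have "\<dots> \<le> (\<Sum>p\<in>P. f p * (real (card ?TT) * (real s / real (card U)) ^ r))"
  proof (intro sum_mono mult_left_mono)
    fix p assume p: "p \<in> P"
    then have "real (card {T. T \<subseteq> U \<and> card T = s \<and> el p \<subseteq> T}) * real (card U) ^ r \<le> real (card ?TT) * real s ^ r"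
      using card_subsets_containing_le[OF assms(1) assms(5)[OF p] assms(3)] assms(6) by simp
    then show "real (card {T. T \<subseteq> U \<and> card T = s \<and> el p \<subseteq> T}) \<le> real (card ?TT) * (real s / real (card U)) ^ r"
      using assms(2) by (simp add: field_simps power_divide)
  qed (use assms(7) in auto)
  also have "\<dots> = real (card ?TT) * (real s / real (card U)) ^ r * (\<Sum>p\<in>P. f p)"
    by (simp add: sum_distrib_left sum_distrib_right mult_ac)
  finally show ?thesis .
qed

lemma exists_le_twice_means:
  fixes f g :: "'a \<Rightarrow> real"
  assumes "finite X" "X \<noteq> {}" "\<alpha> > 0" "\<beta> > 0"
    and "\<And>x. x \<in> X \<Longrightarrow> 0 \<le> f x" "\<And>x. x \<in> X \<Longrightarrow> 0 \<le> g x"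
    and "(\<Sum>x\<in>X. f x) \<le> real (card X) * \<alpha>" "(\<Sum>x\<in>X. g x) \<le> real (card X) * \<beta>"
  shows "\<exists>x\<in>X. f x \<le> 2 * \<alpha> \<and> g x \<le> 2 * \<beta>"
proof -
  have "\<exists>x\<in>X. f x / \<alpha> + g x / \<beta> \<le> 2"
  proof (rule ccontr)
    assume "\<not> ?thesis"
    then have "(\<Sum>x\<in>X. 2) < (\<Sum>x\<in>X. f x / \<alpha> + g x / \<beta>)"
      using assms(1,2) by (intro sum_strict_mono) auto
    also have "\<dots> = (\<Sum>x\<in>X. f x) / \<alpha> + (\<Sum>x\<in>X. g x) / \<beta>"
      by (simp add: sum.distrib sum_divide_distrib)
    also have "\<dots> \<le> real (card X) + real (card X)"
      using assms(3,4,7,8) by (intro add_mono) (simp_all add: divide_le_eq)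
    finally show False by simp
  qed
  then obtain x where "x \<in> X" "f x / \<alpha> + g x / \<beta> \<le> 2" by blast
  moreover have "0 \<le> f x / \<alpha>" "0 \<le> g x / \<beta>" using assms(3-6) \<open>x \<in> X\<close> by simp_all
  ultimately have "x \<in> X" "f x / \<alpha> \<le> 2" "g x / \<beta> \<le> 2" by linarith+
  then show ?thesis using assms(3,4) by (auto simp: pos_divide_le_eq)
qed

section \<open>Adding a block\<close>

definition no_three_collinear :: "(int \<times> int) set \<Rightarrow> bool" where
  "no_three_collinear A \<longleftrightarrow>
     (\<forall>a\<in>A. \<forall>b\<in>A. \<forall>c\<in>A. a \<noteq> b \<longrightarrow> a \<noteq> c \<longrightarrow> b \<noteq> c \<longrightarrow> \<not> int_collinear a b c)"

lemma general_position_if_no_three_collinear: "no_three_collinear S \<Longrightarrow> general_position S"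
  unfolding general_position_def no_three_collinear_def
  using int_collinear_if_collinear_lat_pt by blast

lemma no_three_collinear_Un:
  assumes "no_three_collinear S" "no_three_collinear T"
    and "\<And>a b c. a \<in> S \<Longrightarrow> b \<in> S \<Longrightarrow> c \<in> T \<Longrightarrow> a \<noteq> b \<Longrightarrow> \<not> int_collinear a b c"
    and "\<And>a b c. a \<in> S \<Longrightarrow> b \<in> T \<Longrightarrow> c \<in> T \<Longrightarrow> b \<noteq> c \<Longrightarrow> \<not> int_collinear a b c"
  shows "no_three_collinear (S \<union> T)"
  unfolding no_three_collinear_def
proof (intro ballI impI notI)
  fix a b c assume abc: "a \<in> S \<union> T" "b \<in> S \<union> T" "c \<in> S \<union> T" "a \<noteq> b" "a \<noteq> c" "b \<noteq> c"
    and co: "int_collinear a b c"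
  have perms: "int_collinear b a c" "int_collinear a c b" "int_collinear b c a"
    "int_collinear c a b" "int_collinear c b a"
    using co by (metis int_collinear_commute int_collinear_swap)+
  have "\<not> int_collinear x y z"
    if "x \<in> A" "y \<in> A" "z \<in> A" "x \<noteq> y" "x \<noteq> z" "y \<noteq> z" "no_three_collinear A" for A x y z
    using that unfolding no_three_collinear_def by blast
  note inside = this[OF _ _ _ _ _ _ assms(1)] this[OF _ _ _ _ _ _ assms(2)]
  show False
    by (cases "a \<in> S"; cases "b \<in> S"; cases "c \<in> S")
      (use abc co perms inside assms(3,4) in blast)+
qed

text \<open>Deleting one point from each collinear configuration that involves a new point.\<close>
lemma delete_collinear_points:
  assumes "finite T" "no_three_collinear S"
  obtains T' where "T' \<subseteq> T" "no_three_collinear (S \<union> T')"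
    "card T \<le> card T' + card (collinear_with_two S T) + card (collinear_pairs_with S T)
       + card (collinear_triples T)"
proof
  define Bad where "Bad = collinear_with_two S T \<union> fst ` collinear_pairs_with S T \<union> fst ` collinear_triples T"
  have "Bad \<subseteq> T"
    unfolding Bad_def collinear_with_two_def collinear_pairs_with_def collinear_triples_def by auto
  then have "card (T - Bad) = card T - card Bad"
    using assms(1) by (intro card_Diff_subset) (auto dest: finite_subset)
  moreover have "card Bad \<le> card (collinear_with_two S T) + card (fst ` collinear_pairs_with S T)
      + card (fst ` collinear_triples T)"
    unfolding Bad_def by (meson card_Un_le add_right_mono order_trans)
  moreover have "card (fst ` collinear_pairs_with S T) \<le> card (collinear_pairs_with S T)"
    "card (fst ` collinear_triples T) \<le> card (collinear_triples T)"
    using assms(1) by (simp_all add: card_image_le finite_collinear_pairs_with finite_collinear_triples)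
  ultimately show "card T \<le> card (T - Bad) + card (collinear_with_two S T) + card (collinear_pairs_with S T)
      + card (collinear_triples T)" by linarith
  show "T - Bad \<subseteq> T" by blast
  show "no_three_collinear (S \<union> (T - Bad))"
  proof (rule no_three_collinear_Un[OF assms(2)])
    show "no_three_collinear (T - Bad)"
    proof (unfold no_three_collinear_def, intro ballI impI notI)
      fix a b c assume "a \<in> T - Bad" "b \<in> T - Bad" "c \<in> T - Bad" "a \<noteq> b" "a \<noteq> c" "b \<noteq> c"
        "int_collinear a b c"
      then have "(a, b, c) \<in> collinear_triples T" unfolding collinear_triples_def by auto
      then show False using \<open>a \<in> T - Bad\<close> unfolding Bad_def by force
    qed
    show "\<not> int_collinear a b c" if "a \<in> S" "b \<in> S" "c \<in> T - Bad" "a \<noteq> b" for a b c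
      using that unfolding Bad_def collinear_with_two_def by auto
    show "\<not> int_collinear a b c" if "a \<in> S" "b \<in> T - Bad" "c \<in> T - Bad" "b \<noteq> c" for a b c
    proof
      assume "int_collinear a b c"
      then have "(b, c) \<in> collinear_pairs_with S T" using that unfolding collinear_pairs_with_def by auto
      then show False using that(2) unfolding Bad_def by force
    qed
  qed
qed

lemma sum_subsets_card_collinear_le:
  assumes "finite U" "0 < card U" "s \<le> card U"
  defines "TT \<equiv> {T. T \<subseteq> U \<and> card T = s}" and "\<rho> \<equiv> real s / real (card U)"
  shows "(\<Sum>T\<in>TT. real (card (collinear_with_two S T) + card (collinear_pairs_with S T) + card (collinear_triples T)))
    \<le> real (card TT) * (\<rho> * card (collinear_with_two S U) + \<rho>^2 * card (collinear_pairs_with S U)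
        + \<rho>^3 * card (collinear_triples U))"
proof -
  have fin: "finite (collinear_with_two S U)" "finite (collinear_pairs_with S U)" "finite (collinear_triples U)"
    using assms(1) by (simp_all add: collinear_with_two_def finite_collinear_pairs_with finite_collinear_triples)
  have "(\<Sum>T\<in>TT. real (card (collinear_with_two S T) + card (collinear_pairs_with S T) + card (collinear_triples T)))
      = (\<Sum>T\<in>TT. (\<Sum>c\<in>{c \<in> collinear_with_two S U. {c} \<subseteq> T}. 1)
        + (\<Sum>p\<in>{p \<in> collinear_pairs_with S U. {fst p, snd p} \<subseteq> T}. 1)
        + (\<Sum>q\<in>{q \<in> collinear_triples U. {fst q, fst (snd q), snd (snd q)} \<subseteq> T}. 1))"
  proof (rule sum.cong[OF refl])
    fix T assume "T \<in> TT"
    then have "T \<subseteq> U" unfolding TT_def by simp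
    show "real (card (collinear_with_two S T) + card (collinear_pairs_with S T) + card (collinear_triples T))
      = (\<Sum>c\<in>{c \<in> collinear_with_two S U. {c} \<subseteq> T}. 1)
        + (\<Sum>p\<in>{p \<in> collinear_pairs_with S U. {fst p, snd p} \<subseteq> T}. 1)
        + (\<Sum>q\<in>{q \<in> collinear_triples U. {fst q, fst (snd q), snd (snd q)} \<subseteq> T}. 1)"
      unfolding collinear_with_two_restrict[OF \<open>T \<subseteq> U\<close>] collinear_pairs_with_restrict[OF \<open>T \<subseteq> U\<close>]
        collinear_triples_restrict[OF \<open>T \<subseteq> U\<close>]
      by simp
  qed
  also have "\<dots> = (\<Sum>T\<in>TT. \<Sum>c\<in>{c \<in> collinear_with_two S U. {c} \<subseteq> T}. 1)
      + (\<Sum>T\<in>TT. \<Sum>p\<in>{p \<in> collinear_pairs_with S U. {fst p, snd p} \<subseteq> T}. 1)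
      + (\<Sum>T\<in>TT. \<Sum>q\<in>{q \<in> collinear_triples U. {fst q, fst (snd q), snd (snd q)} \<subseteq> T}. 1)"
    by (simp only: sum.distrib)
  also have "\<dots> \<le> real (card TT) * \<rho> ^ 1 * (\<Sum>c\<in>collinear_with_two S U. 1)
      + real (card TT) * \<rho> ^ 2 * (\<Sum>p\<in>collinear_pairs_with S U. 1)
      + real (card TT) * \<rho> ^ 3 * (\<Sum>q\<in>collinear_triples U. 1)"
  proof (intro add_mono)
    have "{c} \<subseteq> U" if "c \<in> collinear_with_two S U" for c
      using that unfolding collinear_with_two_def by blast
    then show "(\<Sum>T\<in>TT. \<Sum>c\<in>{c \<in> collinear_with_two S U. {c} \<subseteq> T}. 1)
        \<le> real (card TT) * \<rho> ^ 1 * (\<Sum>c\<in>collinear_with_two S U. 1)"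
      unfolding TT_def \<rho>_def by (rule sum_subsets_sum_contained_le[OF assms(1-3) fin(1)]) simp_all
    have "{fst p, snd p} \<subseteq> U" "card {fst p, snd p} = 2" if "p \<in> collinear_pairs_with S U" for p
      using that unfolding collinear_pairs_with_def by (cases p, simp add: card_insert_if)+
    then show "(\<Sum>T\<in>TT. \<Sum>p\<in>{p \<in> collinear_pairs_with S U. {fst p, snd p} \<subseteq> T}. 1)
        \<le> real (card TT) * \<rho> ^ 2 * (\<Sum>p\<in>collinear_pairs_with S U. 1)"
      unfolding TT_def \<rho>_def by (rule sum_subsets_sum_contained_le[OF assms(1-3) fin(2)]) simp_all
    have "{fst q, fst (snd q), snd (snd q)} \<subseteq> U" "card {fst q, fst (snd q), snd (snd q)} = 3"
      if "q \<in> collinear_triples U" for q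
      using that unfolding collinear_triples_def by (cases q, simp add: card_insert_if)+
    then show "(\<Sum>T\<in>TT. \<Sum>q\<in>{q \<in> collinear_triples U. {fst q, fst (snd q), snd (snd q)} \<subseteq> T}. 1)
        \<le> real (card TT) * \<rho> ^ 3 * (\<Sum>q\<in>collinear_triples U. 1)"
      unfolding TT_def \<rho>_def by (rule sum_subsets_sum_contained_le[OF assms(1-3) fin(3)]) simp_all
  qed
  finally show ?thesis by (simp add: algebra_simps)
qed

lemma sum_subsets_weight_le:
  assumes "finite U" "0 < card U" "s \<le> card U" "finite S" "S \<inter> U = {}"
  defines "TT \<equiv> {T. T \<subseteq> U \<and> card T = s}" and "\<rho> \<equiv> real s / real (card U)"
  shows "(\<Sum>T\<in>TT. pair_weight T + 2 * (\<Sum>a\<in>S. \<Sum>c\<in>T. line_density a c))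
    \<le> real (card TT) * (\<rho>^2 * pair_weight U + 2 * \<rho> * (\<Sum>a\<in>S. \<Sum>c\<in>U. line_density a c))"
proof -
  let ?f = "\<lambda>(a, b). line_density a b"
  have "T \<subseteq> U \<Longrightarrow> pair_weight T = (\<Sum>p\<in>{p \<in> U \<times> U - Id. {fst p, snd p} \<subseteq> T}. ?f p)" for T
    unfolding pair_weight_def by (intro sum.cong) auto
  moreover have "T \<subseteq> U \<Longrightarrow> (\<Sum>a\<in>S. \<Sum>c\<in>T. line_density a c) = (\<Sum>p\<in>{p \<in> S \<times> U. {snd p} \<subseteq> T}. ?f p)" for T
    by (simp add: sum.cartesian_product) (intro sum.cong, auto)
  ultimately have "(\<Sum>T\<in>TT. pair_weight T + 2 * (\<Sum>a\<in>S. \<Sum>c\<in>T. line_density a c))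
      = (\<Sum>T\<in>TT. \<Sum>p\<in>{p \<in> U \<times> U - Id. {fst p, snd p} \<subseteq> T}. ?f p)
        + 2 * (\<Sum>T\<in>TT. \<Sum>p\<in>{p \<in> S \<times> U. {snd p} \<subseteq> T}. ?f p)"
    unfolding TT_def by (simp add: sum.distrib sum_distrib_left)
  also have "\<dots> \<le> real (card TT) * \<rho> ^ 2 * (\<Sum>p\<in>U \<times> U - Id. ?f p)
      + 2 * (real (card TT) * \<rho> ^ 1 * (\<Sum>p\<in>S \<times> U. ?f p))"
  proof (intro add_mono mult_left_mono)
    have "{fst p, snd p} \<subseteq> U" "card {fst p, snd p} = 2" if "p \<in> U \<times> U - Id" for p
      using that by (cases p, simp add: card_insert_if)+
    then show "(\<Sum>T\<in>TT. \<Sum>p\<in>{p \<in> U \<times> U - Id. {fst p, snd p} \<subseteq> T}. ?f p)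
        \<le> real (card TT) * \<rho> ^ 2 * (\<Sum>p\<in>U \<times> U - Id. ?f p)"
      unfolding TT_def \<rho>_def using assms(1)
      by (intro sum_subsets_sum_contained_le[OF assms(1-3)]) (simp_all add: line_density_nonneg split_beta)
    have "{snd p} \<subseteq> U" if "p \<in> S \<times> U" for p
      using that by (cases p) simp
    then show "(\<Sum>T\<in>TT. \<Sum>p\<in>{p \<in> S \<times> U. {snd p} \<subseteq> T}. ?f p)
        \<le> real (card TT) * \<rho> ^ 1 * (\<Sum>p\<in>S \<times> U. ?f p)"
      unfolding TT_def \<rho>_def using assms(1,4)
      by (intro sum_subsets_sum_contained_le[OF assms(1-3)]) (simp_all add: line_density_nonneg split_beta)
  qed simp
  also have "\<dots> = real (card TT) * (\<rho>^2 * pair_weight U + 2 * \<rho> * (\<Sum>a\<in>S. \<Sum>c\<in>U. line_density a c))"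
    unfolding pair_weight_def by (simp add: sum.cartesian_product algebra_simps)
  finally show ?thesis .
qed

definition block_gamma :: "nat \<Rightarrow> real" where
  "block_gamma k = 16 * (real k + 2)"

lemma block_gamma_pos: "block_gamma k > 0"
  by (simp add: block_gamma_def)

lemma line_density_sum_block_le: "line_density_sum (2 ^ Suc k) \<le> block_gamma k * 2 ^ k"
proof -
  have "line_density_sum (int (2 ^ Suc k)) \<le> 8 * real (2 ^ Suc k) * harm (2 ^ Suc k)"
    by (rule line_density_sum_le)
  also have "\<dots> \<le> 8 * 2 ^ Suc k * (real (Suc k) + 1)"
    using mult_left_mono[OF harm_pow2_le[of "Suc k"], of "8 * 2 ^ Suc k"] by simp
  also have "\<dots> = block_gamma k * 2 ^ k" by (simp add: block_gamma_def)
  finally show ?thesis by simp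
qed

lemma lattice_square_pow2_disjoint: "lattice_square 0 (2 ^ k) \<inter> lattice_square (2 ^ k) (2 ^ k) = {}"
  unfolding lattice_square_def by auto

lemma lattice_square_pow2_Un_subset:
  "lattice_square 0 (2 ^ k) \<union> lattice_square (2 ^ k) (2 ^ k) \<subseteq> lattice_square 0 (2 ^ Suc k)"
  unfolding lattice_square_def by auto

lemma linf_norm_diff_pow2_le:
  assumes "a \<in> lattice_square 0 (2 ^ k) \<union> lattice_square (2 ^ k) (2 ^ k)" "c \<in> lattice_square (2 ^ k) (2 ^ k)"
  shows "linf_norm (c - a) \<le> 2 ^ Suc k"
  using linf_norm_diff_le[of a 0 "2 ^ Suc k" c] assms lattice_square_pow2_Un_subset[of k] by auto

lemma card_lattice_square_pow2: "card (lattice_square (2 ^ k) (2 ^ k)) = 4 ^ k"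
  unfolding card_lattice_square by (simp add: power2_eq_square flip: power_mult_distrib)

lemma real_pow2_sq: "((2::real) ^ k)\<^sup>2 = 4 ^ k"
  by (simp flip: power_mult_distrib power_mult add: power2_eq_square)

lemma block_collinear_counts_le:
  fixes k :: nat and M P :: real
  assumes "finite S" "S \<subseteq> lattice_square 0 (2^k)" "real (card S) \<le> M" "pair_weight S \<le> P"
  defines "U \<equiv> lattice_square (2^k) (2^k)"
  shows "real (card (collinear_with_two S U)) \<le> 2^k * P + M^2"
    and "real (card (collinear_pairs_with S U)) \<le> M * (4^k * (block_gamma k + 1))"
    and "real (card (collinear_triples U)) \<le> 4^k * (4^k * (block_gamma k + 1))"
proof -
  have NG: "2 ^ k * line_density_sum (2 ^ Suc k) \<le> block_gamma k * 4 ^ k"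
    using mult_left_mono[OF line_density_sum_block_le[of k], of "2 ^ k"]
    by (simp add: real_pow2_sq[symmetric] power2_eq_square mult_ac)
  have "real (card (collinear_with_two S U)) \<le> 2^k * pair_weight S + real (card S) ^ 2"
    using card_collinear_with_two_le[OF assms(1), of "2^k" "2^k"] unfolding U_def by simp
  also have "\<dots> \<le> 2^k * P + M^2"
    using assms(3,4) by (intro add_mono mult_left_mono power_mono) auto
  finally show "real (card (collinear_with_two S U)) \<le> 2^k * P + M^2" .
  have "real (card (collinear_pairs_with S U)) \<le> real (card S) * (2 ^ k * line_density_sum (2 ^ Suc k) + 4 ^ k)"
    using card_collinear_pairs_with_le[OF assms(1), of "2^k" "2^k" "2 ^ Suc k"] assms(2)
      lattice_square_pow2_disjoint[of k] linf_norm_diff_pow2_le[of _ k]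
    unfolding U_def by (force simp: real_pow2_sq)
  also have "\<dots> \<le> M * (4 ^ k * (block_gamma k + 1))"
    using NG assms(3) line_density_sum_nonneg[of "2 ^ Suc k"]
    by (intro mult_mono) (auto simp: algebra_simps)
  finally show "real (card (collinear_pairs_with S U)) \<le> M * (4 ^ k * (block_gamma k + 1))" .
  have "line_density_sum (2 ^ k) \<le> line_density_sum (2 ^ Suc k)"
    by (rule line_density_sum_mono) simp
  then have "2 ^ k * line_density_sum (2 ^ k) \<le> block_gamma k * 4 ^ k"
    using NG by (meson mult_left_mono zero_le_power zero_le_numeral order_trans)
  moreover have "4 ^ k * (block_gamma k + 1) = block_gamma k * 4 ^ k + 4 ^ k" by (simp add: algebra_simps)
  ultimately have "2 ^ k * line_density_sum (2 ^ k) + 4 ^ k \<le> 4 ^ k * (block_gamma k + 1)" by linarith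
  then have "4 ^ k * (2 ^ k * line_density_sum (2 ^ k) + 4 ^ k) \<le> 4 ^ k * (4 ^ k * (block_gamma k + 1))"
    by (rule mult_left_mono) simp
  moreover have "real (card (collinear_triples U)) \<le> 4 ^ k * (2 ^ k * line_density_sum (2 ^ k) + 4 ^ k)"
    using card_collinear_triples_le[of "2^k" "2^k"] unfolding U_def
    by (simp only: of_nat_power of_nat_numeral real_pow2_sq)
  ultimately show "real (card (collinear_triples U)) \<le> 4 ^ k * (4 ^ k * (block_gamma k + 1))"
    by linarith
qed

lemma block_weights_le:
  fixes k :: nat and M :: real
  assumes "finite S" "S \<subseteq> lattice_square 0 (2^k)" "real (card S) \<le> M"
  defines "U \<equiv> lattice_square (2^k) (2^k)"
  shows "pair_weight U \<le> 4 ^ k * (block_gamma k * 2 ^ k)"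
    and "(\<Sum>a\<in>S. \<Sum>c\<in>U. line_density a c) \<le> M * (block_gamma k * 2 ^ k)"
proof -
  have near: "linf_norm (c - a) \<le> 2 ^ Suc k" if "a \<in> S \<union> U" "c \<in> U" for a c
    using that assms(2) linf_norm_diff_pow2_le[of a k c] unfolding U_def by blast
  have G: "line_density_sum (2 ^ Suc k) \<le> block_gamma k * 2 ^ k"
    by (rule line_density_sum_block_le)
  have "pair_weight U \<le> real (card U) * line_density_sum (2 ^ Suc k)"
    by (rule pair_weight_le) (use near U_def in auto)
  also have "\<dots> \<le> 4 ^ k * (block_gamma k * 2 ^ k)"
    using G unfolding U_def card_lattice_square_pow2 by (simp add: mult_left_mono)
  finally show "pair_weight U \<le> 4 ^ k * (block_gamma k * 2 ^ k)" .
  have "(\<Sum>c\<in>U. line_density a c) \<le> line_density_sum (2 ^ Suc k)" if "a \<in> S" for a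
  proof -
    have "U - {a} = U" using that assms(2) lattice_square_pow2_disjoint[of k] unfolding U_def by blast
    then show ?thesis using sum_line_density_le[of U a] near that unfolding U_def by auto
  qed
  then have "(\<Sum>a\<in>S. \<Sum>c\<in>U. line_density a c) \<le> real (card S) * line_density_sum (2 ^ Suc k)"
    using sum_mono[of S _ "\<lambda>_. line_density_sum (2 ^ Suc k)"] by simp
  also have "\<dots> \<le> M * (block_gamma k * 2 ^ k)"
    using G assms(3) line_density_sum_nonneg by (intro mult_mono) auto
  finally show "(\<Sum>a\<in>S. \<Sum>c\<in>U. line_density a c) \<le> M * (block_gamma k * 2 ^ k)" .
qed

lemma block_sum_subsets_collinear_le:
  fixes k s :: nat and M P :: real
  assumes "finite S" "S \<subseteq> lattice_square 0 (2^k)" "real (card S) \<le> M" "pair_weight S \<le> P" "s \<le> 4^k"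
  defines "TT \<equiv> {T. T \<subseteq> lattice_square (2^k) (2^k) \<and> card T = s}"
  shows "(\<Sum>T\<in>TT. real (card (collinear_with_two S T) + card (collinear_pairs_with S T) + card (collinear_triples T)))
    \<le> real (card TT) * real s * ((2^k * P + M^2) / 4^k + (real s * M + real s ^ 2) * (block_gamma k + 1) / 4^k)"
proof -
  define U where "U = lattice_square (2^k) (2^k)"
  define \<rho> where "\<rho> = real s / 4 ^ k"
  have "(\<Sum>T\<in>TT. real (card (collinear_with_two S T) + card (collinear_pairs_with S T)
      + card (collinear_triples T)))
    \<le> real (card TT) * (\<rho> * card (collinear_with_two S U) + \<rho>^2 * card (collinear_pairs_with S U)
      + \<rho>^3 * card (collinear_triples U))"
    using sum_subsets_card_collinear_le[of U s S] assms(5)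
    unfolding TT_def U_def \<rho>_def card_lattice_square_pow2 by simp
  also have "\<dots> \<le> real (card TT) * (\<rho> * (2^k * P + M^2) + \<rho>^2 * (M * (4^k * (block_gamma k + 1)))
      + \<rho>^3 * (4^k * (4^k * (block_gamma k + 1))))"
    using block_collinear_counts_le[OF assms(1-4)] unfolding U_def[symmetric]
    by (intro mult_left_mono add_mono) (auto simp: \<rho>_def)
  also have "\<dots> = real (card TT) * real s * ((2^k * P + M^2) / 4^k
      + (real s * M + real s ^ 2) * (block_gamma k + 1) / 4^k)"
    unfolding \<rho>_def by (simp add: field_simps power2_eq_square power3_eq_cube)
  finally show ?thesis .
qed

lemma block_sum_subsets_weight_le:
  fixes k s :: nat and M :: real
  assumes "finite S" "S \<subseteq> lattice_square 0 (2^k)" "real (card S) \<le> M" "s \<le> 4^k"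
  defines "TT \<equiv> {T. T \<subseteq> lattice_square (2^k) (2^k) \<and> card T = s}"
  shows "(\<Sum>T\<in>TT. pair_weight T + 2 * (\<Sum>a\<in>S. \<Sum>c\<in>T. line_density a c))
    \<le> real (card TT) * (block_gamma k * real s * (real s + 2 * M) / 2^k)"
proof -
  define U where "U = lattice_square (2^k) (2^k)"
  define \<rho> where "\<rho> = real s / 4 ^ k"
  have "S \<inter> U = {}" using assms(2) lattice_square_pow2_disjoint[of k] unfolding U_def by blast
  then have "(\<Sum>T\<in>TT. pair_weight T + 2 * (\<Sum>a\<in>S. \<Sum>c\<in>T. line_density a c))
      \<le> real (card TT) * (\<rho>^2 * pair_weight U + 2 * \<rho> * (\<Sum>a\<in>S. \<Sum>c\<in>U. line_density a c))"
    using sum_subsets_weight_le[of U s S] assms(1,4)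
    unfolding TT_def U_def \<rho>_def card_lattice_square_pow2 by simp
  also have "\<dots> \<le> real (card TT) * (\<rho>^2 * (4 ^ k * (block_gamma k * 2 ^ k))
      + 2 * \<rho> * (M * (block_gamma k * 2 ^ k)))"
    using block_weights_le[OF assms(1-3)] unfolding U_def[symmetric]
    by (intro mult_left_mono add_mono) (auto simp: \<rho>_def)
  also have "\<dots> = real (card TT) * (block_gamma k * real s * (real s + 2 * M) / 2^k)"
    unfolding \<rho>_def by (simp add: field_simps power2_eq_square real_pow2_sq[symmetric])
  finally show ?thesis .
qed

lemma admissible_size_le:
  fixes k s :: nat and M P :: real
  assumes "0 \<le> M" "0 \<le> P"
    and "(2^k * P + M^2) / 4^k + (real s * M + real s ^ 2) * (block_gamma k + 1) / 4^k \<le> 1/4"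
  shows "s \<le> 4 ^ k"
proof -
  have "(real s * M + real s ^ 2) * (block_gamma k + 1) / 4^k =
      real s * M * (block_gamma k + 1) / 4^k + real s ^ 2 * (block_gamma k + 1) / 4^k"
    by (simp add: distrib_right add_divide_distrib)
  moreover have "0 \<le> (2^k * P + M^2) / 4^k" "0 \<le> real s * M * (block_gamma k + 1) / 4^k"
    using assms(1,2) block_gamma_pos[of k] by simp_all
  ultimately have "real s ^ 2 * (block_gamma k + 1) / 4^k \<le> 1/4"
    using assms(3) by linarith
  then have "real s ^ 2 * (block_gamma k + 1) \<le> 4^k / 4" by (simp only: pos_divide_le_eq zero_less_power)
  moreover have "real s ^ 2 \<le> real s ^ 2 * (block_gamma k + 1)"
    using block_gamma_pos[of k] by (simp add: mult_le_cancel_left1)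
  moreover have "(0::real) \<le> 4 ^ k" "real s \<le> real s ^ 2" by (cases s, auto simp: power2_eq_square)+
  ultimately have "real s \<le> 4 ^ k" by linarith
  then show "s \<le> 4 ^ k" by simp
qed

lemma exists_block_subset:
  fixes k s :: nat and M P :: real
  assumes "finite S" "S \<subseteq> lattice_square 0 (2^k)" "real (card S) \<le> M" "pair_weight S \<le> P" "0 < s"
    and admissible: "(2^k * P + M^2) / 4^k + (real s * M + real s ^ 2) * (block_gamma k + 1) / 4^k \<le> 1/4"
  obtains T where "T \<subseteq> lattice_square (2^k) (2^k)" "card T = s"
    "real (card (collinear_with_two S T) + card (collinear_pairs_with S T) + card (collinear_triples T))
      \<le> real s / 2"
    "pair_weight T + 2 * (\<Sum>a\<in>S. \<Sum>c\<in>T. line_density a c)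
      \<le> 2 * (block_gamma k * real s * (real s + 2 * M) / 2^k)"
proof -
  have M0: "0 \<le> M" using assms(3) by linarith
  have s_le: "s \<le> 4 ^ k"
    using admissible_size_le[OF M0 _ admissible] assms(4) pair_weight_nonneg[of S] by linarith
  define TT where "TT = {T. T \<subseteq> lattice_square (2^k) (2^k) \<and> card T = s}"
  have "finite TT" unfolding TT_def by (simp add: finite_Collect_subsets)
  moreover have "TT \<noteq> {}"
  proof -
    obtain T where "T \<subseteq> lattice_square (2^k) (2^k)" "card T = s"
      using s_le card_lattice_square_pow2[of k] by (metis obtain_subset_with_card_n)
    then show ?thesis unfolding TT_def by blast
  qed
  moreover have "(\<Sum>T\<in>TT. real (card (collinear_with_two S T) + card (collinear_pairs_with S T)
      + card (collinear_triples T))) \<le> real (card TT) * (real s / 4)"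
  proof -
    have "real s * ((2^k * P + M^2) / 4^k + (real s * M + real s ^ 2) * (block_gamma k + 1) / 4^k)
        \<le> real s * (1/4)"
      using admissible by (intro mult_left_mono) auto
    then have "real (card TT) * real s * ((2^k * P + M^2) / 4^k
        + (real s * M + real s ^ 2) * (block_gamma k + 1) / 4^k) \<le> real (card TT) * (real s / 4)"
      unfolding mult.assoc by (intro mult_left_mono) auto
    then show ?thesis
      using block_sum_subsets_collinear_le[OF assms(1-4) s_le] unfolding TT_def by linarith
  qed
  moreover have "(\<Sum>T\<in>TT. pair_weight T + 2 * (\<Sum>a\<in>S. \<Sum>c\<in>T. line_density a c))
      \<le> real (card TT) * (block_gamma k * real s * (real s + 2 * M) / 2^k)"
    using block_sum_subsets_weight_le[OF assms(1-3) s_le] unfolding TT_def .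
  moreover have "0 < real s / 4" "0 < block_gamma k * real s * (real s + 2 * M) / 2^k"
    using block_gamma_pos[of k] assms(5) M0 by simp_all
  moreover have "0 \<le> pair_weight T + 2 * (\<Sum>a\<in>S. \<Sum>c\<in>T. line_density a c)" for T
    by (intro add_nonneg_nonneg mult_nonneg_nonneg sum_nonneg pair_weight_nonneg line_density_nonneg) simp
  ultimately have "\<exists>T\<in>TT.
      real (card (collinear_with_two S T) + card (collinear_pairs_with S T) + card (collinear_triples T))
        \<le> 2 * (real s / 4) \<and>
      pair_weight T + 2 * (\<Sum>a\<in>S. \<Sum>c\<in>T. line_density a c)
        \<le> 2 * (block_gamma k * real s * (real s + 2 * M) / 2^k)"
    by (intro exists_le_twice_means) auto
  then show ?thesis using that unfolding TT_def by auto
qed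

lemma extend_by_block:
  fixes k s :: nat and M P :: real
  assumes "finite S" "S \<subseteq> lattice_square 0 (2^k)" "no_three_collinear S"
    and "real (card S) \<le> M" "pair_weight S \<le> P"
    and "(2^k * P + M^2) / 4^k + (real s * M + real s ^ 2) * (block_gamma k + 1) / 4^k \<le> 1/4"
  obtains T where "T \<subseteq> lattice_square (2^k) (2^k)" "no_three_collinear (S \<union> T)"
    "s \<le> 2 * card T" "card T \<le> s"
    "pair_weight (S \<union> T) \<le> pair_weight S + 2 * (block_gamma k * real s * (real s + 2 * M) / 2^k)"
proof (cases "s = 0")
  case True
  then show ?thesis using assms(3) that[of "{}"] by simp
next
  case False
  obtain T0 where T0: "T0 \<subseteq> lattice_square (2^k) (2^k)" "card T0 = s"
    "real (card (collinear_with_two S T0) + card (collinear_pairs_with S T0) + card (collinear_triples T0))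
      \<le> real s / 2"
    "pair_weight T0 + 2 * (\<Sum>a\<in>S. \<Sum>c\<in>T0. line_density a c)
      \<le> 2 * (block_gamma k * real s * (real s + 2 * M) / 2^k)"
    using exists_block_subset[OF assms(1,2,4,5) _ assms(6)] False by blast
  have fin: "finite T0" using T0(1) by (rule finite_subset) simp
  obtain T where T: "T \<subseteq> T0" "no_three_collinear (S \<union> T)"
    "card T0 \<le> card T + card (collinear_with_two S T0) + card (collinear_pairs_with S T0)
       + card (collinear_triples T0)"
    using delete_collinear_points[OF fin assms(3)] by blast
  show ?thesis
  proof (rule that[of T])
    show "T \<subseteq> lattice_square (2^k) (2^k)" "no_three_collinear (S \<union> T)" using T(1,2) T0(1) by auto
    show "s \<le> 2 * card T" using T(3) T0(2,3) by linarith
    show "card T \<le> s" using card_mono[OF fin T(1)] T0(2) by simp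
    have "S \<inter> T = {}" using assms(2) T0(1) T(1) lattice_square_pow2_disjoint[of k] by blast
    then have "pair_weight (S \<union> T) = pair_weight S + pair_weight T + 2 * (\<Sum>a\<in>S. \<Sum>c\<in>T. line_density a c)"
      by (rule pair_weight_Un[OF assms(1) finite_subset[OF T(1) fin]])
    also have "\<dots> \<le> pair_weight S + pair_weight T0 + 2 * (\<Sum>a\<in>S. \<Sum>c\<in>T0. line_density a c)"
      using assms(1) fin T(1) by (intro add_mono pair_weight_mono mult_left_mono sum_mono sum_mono2)
        (auto intro: line_density_nonneg)
    finally show "pair_weight (S \<union> T) \<le> pair_weight S + 2 * (block_gamma k * real s * (real s + 2 * M) / 2^k)"
      using T0(4) by linarith
  qed
qed

section \<open>The construction\<close>

definition target :: "real \<Rightarrow> nat \<Rightarrow> nat" where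
  "target a k = nat \<lfloor>2 ^ k / real k powr a\<rfloor>"

definition block_size :: "real \<Rightarrow> nat \<Rightarrow> nat" where
  "block_size a k = target a (Suc k) - target a k"

definition size_bound :: "real \<Rightarrow> nat \<Rightarrow> nat" where
  "size_bound a k = (\<Sum>j<k. block_size a j)"

definition weight_increment :: "real \<Rightarrow> nat \<Rightarrow> real" where
  "weight_increment a k =
     2 * (block_gamma k * real (block_size a k) * (real (block_size a k) + 2 * real (size_bound a k)) / 2 ^ k)"

definition weight_bound :: "real \<Rightarrow> nat \<Rightarrow> real" where
  "weight_bound a k = (\<Sum>j<k. weight_increment a j)"

definition admissible :: "real \<Rightarrow> nat \<Rightarrow> bool" where
  "admissible a k \<longleftrightarrow>
     (2 ^ k * weight_bound a k + real (size_bound a k) ^ 2) / 4 ^ k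
     + (real (block_size a k) * real (size_bound a k) + real (block_size a k) ^ 2) * (block_gamma k + 1) / 4 ^ k
     \<le> 1/4"

text \<open>Stages at which the block estimate is not yet available add nothing.\<close>
definition added_size :: "real \<Rightarrow> nat \<Rightarrow> nat" where
  "added_size a k = (if admissible a k then block_size a k else 0)"

definition good_block :: "real \<Rightarrow> nat \<Rightarrow> (int \<times> int) set \<Rightarrow> (int \<times> int) set \<Rightarrow> bool" where
  "good_block a k S T \<longleftrightarrow> T \<subseteq> lattice_square (2 ^ k) (2 ^ k) \<and> no_three_collinear (S \<union> T)
     \<and> added_size a k \<le> 2 * card T \<and> card T \<le> added_size a k
     \<and> pair_weight (S \<union> T) \<le> pair_weight S + weight_increment a k"

text \<open>Stage \<open>k\<close> lives in \<open>[1,2^k]\<^sup>2\<close>; the block added to it lies in the diagonal square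
  \<open>(2^k, 2^(k+1)]\<^sup>2\<close>.\<close>
primrec stage :: "real \<Rightarrow> nat \<Rightarrow> (int \<times> int) set" where
  "stage a 0 = {}"
| "stage a (Suc k) = stage a k \<union> (SOME T. good_block a k (stage a k) T)"

definition construction :: "real \<Rightarrow> (int \<times> int) set" where
  "construction a = (\<Union>k. stage a k)"

definition stage_invariant :: "real \<Rightarrow> nat \<Rightarrow> (int \<times> int) set \<Rightarrow> bool" where
  "stage_invariant a k S \<longleftrightarrow> finite S \<and> S \<subseteq> lattice_square 0 (2 ^ k) \<and> no_three_collinear S
     \<and> card S \<le> size_bound a k \<and> pair_weight S \<le> weight_bound a k
     \<and> (\<Sum>j<k. added_size a j) \<le> 2 * card S"

lemma good_block_exists:
  assumes "stage_invariant a k S"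
  shows "\<exists>T. good_block a k S T"
proof (cases "admissible a k")
  case True
  have S: "finite S" "S \<subseteq> lattice_square 0 (2 ^ k)" "no_three_collinear S"
    "real (card S) \<le> real (size_bound a k)" "pair_weight S \<le> weight_bound a k"
    using assms unfolding stage_invariant_def by auto
  obtain T where "T \<subseteq> lattice_square (2^k) (2^k)" "no_three_collinear (S \<union> T)"
    "block_size a k \<le> 2 * card T" "card T \<le> block_size a k"
    "pair_weight (S \<union> T) \<le> pair_weight S + 2 * (block_gamma k * real (block_size a k)
      * (real (block_size a k) + 2 * real (size_bound a k)) / 2^k)"
    using True unfolding admissible_def by (rule extend_by_block[OF S])
  then show ?thesis using True unfolding good_block_def added_size_def weight_increment_def by auto
next
  case False
  have "0 \<le> weight_increment a k"
    unfolding weight_increment_def using block_gamma_pos[of k] by simp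
  then have "good_block a k S {}"
    using False assms unfolding good_block_def added_size_def stage_invariant_def by simp
  then show ?thesis ..
qed

lemma stage_invariant_stage: "stage_invariant a k (stage a k)"
proof (induction k)
  case 0
  show ?case
    by (simp add: stage_invariant_def no_three_collinear_def pair_weight_def size_bound_def weight_bound_def)
next
  case (Suc k)
  define S where "S = stage a k"
  define T where "T = (SOME T. good_block a k S T)"
  have S: "finite S" "S \<subseteq> lattice_square 0 (2 ^ k)" "card S \<le> size_bound a k"
    "pair_weight S \<le> weight_bound a k" "(\<Sum>j<k. added_size a j) \<le> 2 * card S"
    using Suc.IH unfolding S_def stage_invariant_def by auto
  have "good_block a k S T"
    unfolding T_def S_def by (rule someI_ex[OF good_block_exists[OF Suc.IH]])
  then have T: "T \<subseteq> lattice_square (2 ^ k) (2 ^ k)" "no_three_collinear (S \<union> T)"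
    "added_size a k \<le> 2 * card T" "card T \<le> added_size a k"
    "pair_weight (S \<union> T) \<le> pair_weight S + weight_increment a k"
    unfolding good_block_def by auto
  have "finite T" using T(1) by (rule finite_subset) simp
  moreover have "S \<inter> T = {}" using S(2) T(1) lattice_square_pow2_disjoint[of k] by blast
  ultimately have card_Un: "card (S \<union> T) = card S + card T" using S(1) by (simp add: card_Un_disjoint)
  have "S \<union> T \<subseteq> lattice_square 0 (2 ^ Suc k)"
    using S(2) T(1) lattice_square_pow2_Un_subset[of k] by blast
  moreover have "card S + card T \<le> size_bound a (Suc k)"
    using S(3) T(4) unfolding size_bound_def added_size_def by (simp split: if_splits)
  moreover have "pair_weight (S \<union> T) \<le> weight_bound a (Suc k)"
    using S(4) T(5) unfolding weight_bound_def by simp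
  ultimately have "stage_invariant a (Suc k) (S \<union> T)"
    unfolding stage_invariant_def using S(1,5) T(2,3) \<open>finite T\<close> card_Un by simp
  then show ?case unfolding S_def T_def by simp
qed

lemma good_block_stage: "good_block a k (stage a k) (stage a (Suc k) - stage a k)"
proof -
  have "good_block a k (stage a k) (SOME T. good_block a k (stage a k) T)"
    using good_block_exists[OF stage_invariant_stage] by (rule someI_ex)
  moreover have "stage a k \<inter> (SOME T. good_block a k (stage a k) T) = {}"
    using stage_invariant_stage[of a k] calculation lattice_square_pow2_disjoint[of k]
    unfolding stage_invariant_def good_block_def by blast
  moreover have "stage a (Suc k) - stage a k = (SOME T. good_block a k (stage a k) T)"
    using calculation(2) by auto
  ultimately show ?thesis by simp
qed

lemma stage_mono: "k \<le> l \<Longrightarrow> stage a k \<subseteq> stage a l"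
  by (induction l rule: dec_induct) auto

lemma no_three_collinear_construction: "no_three_collinear (construction a)"
  unfolding no_three_collinear_def
proof (intro ballI impI)
  fix p q r assume "p \<in> construction a" "q \<in> construction a" "r \<in> construction a"
    and distinct: "p \<noteq> q" "p \<noteq> r" "q \<noteq> r"
  then obtain i j l where "p \<in> stage a i" "q \<in> stage a j" "r \<in> stage a l"
    unfolding construction_def by auto
  then have "p \<in> stage a (max i (max j l))" "q \<in> stage a (max i (max j l))" "r \<in> stage a (max i (max j l))"
    using stage_mono[of _ "max i (max j l)" a] by (meson max.cobounded1 max.cobounded2 order_trans subsetD)+
  then show "\<not> int_collinear p q r"
    using stage_invariant_stage[of a "max i (max j l)"] distinct unfolding stage_invariant_def no_three_collinear_def
    by blast
qed

text \<open>Points added after stage \<open>K\<close> have abscissa larger than \<open>2^K\<close>.\<close>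
lemma stage_if_fst_le:
  assumes "p \<in> stage a j" "fst p \<le> 2 ^ K"
  shows "p \<in> stage a K"
  using assms(1)
proof (induction j)
  case (Suc j)
  show ?case
  proof (cases "p \<in> stage a j")
    case False
    then have "p \<in> lattice_square (2 ^ j) (2 ^ j)"
      using Suc.prems good_block_stage[of a j] unfolding good_block_def by blast
    then have "2 ^ j + 1 \<le> fst p" unfolding lattice_square_def by (auto simp: mem_Times_iff)
    then have "(2::int) ^ j < 2 ^ K" using assms(2) by linarith
    then have "Suc j \<le> K" by simp
    then show ?thesis using Suc.prems stage_mono by blast
  qed (use Suc.IH in blast)
qed simp

lemma card_construction_grid_ge:
  assumes "2 ^ K \<le> n"
  shows "card (stage a K) \<le> card (construction a \<inter> grid n)"
proof (rule card_mono)
  show "finite (construction a \<inter> grid n)" unfolding grid_def by simp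
  have "lattice_square 0 (2 ^ K) \<subseteq> grid n"
    using assms unfolding lattice_square_def grid_def
    by (auto simp: subset_iff) (metis of_nat_le_iff of_nat_numeral of_nat_power order_trans)+
  then show "stage a K \<subseteq> construction a \<inter> grid n"
    using stage_invariant_stage[of a K] unfolding construction_def stage_invariant_def by blast
qed

lemma card_construction_grid_le:
  assumes "n \<le> 2 ^ K"
  shows "card (construction a \<inter> grid n) \<le> size_bound a K"
proof -
  have "construction a \<inter> grid n \<subseteq> stage a K"
  proof
    fix p assume "p \<in> construction a \<inter> grid n"
    then obtain j where "p \<in> stage a j" "fst p \<le> int n" unfolding construction_def grid_def by auto
    moreover have "int n \<le> 2 ^ K" using assms by (metis of_nat_le_iff of_nat_numeral of_nat_power)
    ultimately have "fst p \<le> 2 ^ K" by linarith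
    then show "p \<in> stage a K" using stage_if_fst_le \<open>p \<in> stage a j\<close> by blast
  qed
  then have "card (construction a \<inter> grid n) \<le> card (stage a K)"
    using stage_invariant_stage[of a K] unfolding stage_invariant_def by (intro card_mono) auto
  also have "\<dots> \<le> size_bound a K" using stage_invariant_stage[of a K] unfolding stage_invariant_def by simp
  finally show ?thesis .
qed

section \<open>Growth of the construction\<close>

lemma target_le: "real (target a k) \<le> 2 ^ k / real k powr a"
  unfolding target_def by simp

lemma target_gt: "2 ^ k / real k powr a - 1 < real (target a k)"
  unfolding target_def by linarith

lemma pow2_div_powr_le:
  assumes "1 \<le> a" "1 \<le> k"
  shows "2 ^ k / real k powr a \<le> 2 ^ k / real k"
proof -
  have "real k \<le> real k powr a" using assms powr_mono[of 1 a "real k"] by simp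
  then show ?thesis using assms by (intro divide_left_mono) auto
qed

lemma target_le_pow2_div: "1 \<le> a \<Longrightarrow> 1 \<le> k \<Longrightarrow> real (target a k) \<le> 2 ^ k / real k"
  using target_le[of a k] pow2_div_powr_le[of a k] by linarith

lemma block_size_le:
  assumes "1 \<le> a" "1 \<le> k"
  shows "real (block_size a k) \<le> 2 * (2 ^ k / real k)"
proof -
  have "real (block_size a k) \<le> real (target a (Suc k))" unfolding block_size_def by simp
  also have "\<dots> \<le> 2 ^ Suc k / real (Suc k)" using assms by (intro target_le_pow2_div) auto
  also have "\<dots> \<le> 2 ^ Suc k / real k" using assms by (intro divide_left_mono) auto
  finally show ?thesis by simp
qed

lemma eventually_target_mono: "eventually (\<lambda>k. target a k \<le> target a (Suc k)) sequentially"
proof -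
  have "eventually (\<lambda>k::nat. 2 ^ k / real k powr a \<le> 2 ^ Suc k / real (Suc k) powr a) sequentially"
    by real_asymp
  then show ?thesis
    unfolding target_def by eventually_elim (intro nat_mono floor_mono)
qed

lemma target_mono_from:
  assumes "\<forall>k\<ge>K. target a k \<le> target a (Suc k)" "K \<le> k"
  shows "target a K \<le> target a k"
  using assms(2) by (induction k rule: dec_induct) (use assms(1) in \<open>auto intro: order_trans\<close>)

lemma size_bound_eq:
  assumes "\<forall>k\<ge>K. target a k \<le> target a (Suc k)" "K \<le> k"
  shows "size_bound a k = size_bound a K + (target a k - target a K)"
  using assms(2)
proof (induction k rule: dec_induct)
  case (step k)
  then show ?case
    using assms(1) target_mono_from[OF assms(1) step.hyps(1)]
    unfolding size_bound_def block_size_def by auto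
qed simp

lemma target_le_sum_added_size:
  assumes "\<forall>k\<ge>K. target a k \<le> target a (Suc k) \<and> admissible a k" "K \<le> k"
  shows "target a k \<le> (\<Sum>j<k. added_size a j) + target a K"
  using assms(2)
proof (induction k rule: dec_induct)
  case (step k)
  then show ?case using assms(1) unfolding added_size_def block_size_def by auto
qed simp

lemma eventually_size_bound_le:
  "eventually (\<lambda>k. real (size_bound a k) \<le> 2 * (2 ^ k / real k powr a)) sequentially"
proof -
  obtain K where K: "\<forall>k\<ge>K. target a k \<le> target a (Suc k)"
    using eventually_target_mono[of a] unfolding eventually_sequentially by blast
  have "eventually (\<lambda>k::nat. real (size_bound a K) \<le> 2 ^ k / real k powr a) sequentially"
    by real_asymp
  moreover have "eventually (\<lambda>k. K \<le> k) sequentially" by (rule eventually_ge_at_top)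
  ultimately show ?thesis
  proof eventually_elim
    case (elim k)
    then have "real (size_bound a k) \<le> real (size_bound a K) + real (target a k)"
      using size_bound_eq[OF K elim(2)] by simp
    then show ?case using elim(1) target_le[of a k] by linarith
  qed
qed

lemma eventually_size_bound_le_pow2_div:
  assumes "1 \<le> a"
  shows "eventually (\<lambda>k. real (size_bound a k) \<le> 2 * (2 ^ k / real k)) sequentially"
  using eventually_size_bound_le[of a] eventually_ge_at_top[of 1]
  by eventually_elim (use pow2_div_powr_le[OF assms] in fastforce)

lemma weight_increment_le:
  assumes "1 \<le> a" "1 \<le> k" "real (size_bound a k) \<le> 2 * (2 ^ k / real k)"
  shows "weight_increment a k \<le> 2 ^ k * (384 * (real k + 2) / real k ^ 2)"
proof -
  define x where "x = 2 ^ k / real k"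
  have "real (block_size a k) \<le> 2 * x" unfolding x_def by (rule block_size_le[OF assms(1,2)])
  moreover have "real (block_size a k) + 2 * real (size_bound a k) \<le> 6 * x"
    using assms(3) calculation unfolding x_def by linarith
  ultimately have "real (block_size a k) * (real (block_size a k) + 2 * real (size_bound a k))
      \<le> (2 * x) * (6 * x)"
    by (intro mult_mono) (auto simp: x_def)
  then have "weight_increment a k \<le> 2 * (block_gamma k * ((2 * x) * (6 * x)) / 2 ^ k)"
    unfolding weight_increment_def using block_gamma_pos[of k]
    by (simp add: mult.assoc mult_left_mono divide_right_mono)
  also have "\<dots> = 2 ^ k * (384 * (real k + 2) / real k ^ 2)"
    unfolding block_gamma_def x_def using assms(2) by (simp add: field_simps power2_eq_square)
  finally show ?thesis .
qed

lemma eventually_weight_bound_le: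
  assumes "1 \<le> a"
  shows "eventually (\<lambda>k. weight_bound a k \<le> 2 ^ k / 32) sequentially"
proof -
  have "eventually (\<lambda>k. real (size_bound a k) \<le> 2 * (2 ^ k / real k)) sequentially"
    using eventually_size_bound_le_pow2_div[OF assms] .
  moreover have "eventually (\<lambda>k::nat. 384 * (real k + 2) / real k ^ 2 \<le> 1 / 64) sequentially"
    by real_asymp
  moreover have "eventually (\<lambda>k::nat. 1 \<le> k) sequentially" by (rule eventually_ge_at_top)
  ultimately have "eventually (\<lambda>k. weight_increment a k \<le> 2 ^ k / 64) sequentially"
  proof eventually_elim
    case (elim k)
    then have "weight_increment a k \<le> 2 ^ k * (384 * (real k + 2) / real k ^ 2)"
      using weight_increment_le[OF assms] by simp
    also have "\<dots> \<le> 2 ^ k * (1 / 64)" using elim(2) by (intro mult_left_mono) auto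
    finally show ?case by simp
  qed
  then obtain J where J: "\<And>k. J \<le> k \<Longrightarrow> weight_increment a k \<le> 2 ^ k / 64"
    unfolding eventually_sequentially by blast
  have bound: "weight_bound a k \<le> weight_bound a J + 2 ^ k / 64" if "J \<le> k" for k
    using that
  proof (induction k rule: dec_induct)
    case (step k)
    then show ?case using J[of k] unfolding weight_bound_def by simp
  qed simp
  have "eventually (\<lambda>k::nat. weight_bound a J \<le> 2 ^ k / 64) sequentially" by real_asymp
  moreover have "eventually (\<lambda>k. J \<le> k) sequentially" by (rule eventually_ge_at_top)
  ultimately show ?thesis by eventually_elim (use bound in fastforce)
qed

lemma admissible_arith:
  fixes X s m P :: real
  assumes "1 \<le> k" "0 < X" "0 \<le> s" "s \<le> 2 * (X / real k)" "0 \<le> m" "m \<le> 2 * (X / real k)"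
    and "P / X \<le> 1/32" "(12 + 128 * (real k + 2)) / real k ^ 2 \<le> 1/8"
  shows "(X * P + m^2) / X^2 + (s * m + s^2) * (block_gamma k + 1) / X^2 \<le> 1/4"
proof -
  define y where "y = 2 * (X / real k)"
  have "0 \<le> y" unfolding y_def using assms(2) by simp
  have y: "y^2 / X^2 = 4 / real k^2" unfolding y_def using assms(1,2) by (simp add: field_simps power2_eq_square)
  have "m^2 \<le> y^2" using assms(5,6) unfolding y_def by (intro power_mono) auto
  then have m: "m^2 / X^2 \<le> 4 / real k^2" unfolding y[symmetric] by (intro divide_right_mono) auto
  have "s * m \<le> y * y" using assms(3-6) \<open>0 \<le> y\<close> by (intro mult_mono) (auto simp: y_def)
  moreover have "s^2 \<le> y^2" using assms(3,4) by (intro power_mono) (auto simp: y_def)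
  ultimately have "s * m + s^2 \<le> 2 * y^2" by (simp add: power2_eq_square)
  then have "(s * m + s^2) / X^2 \<le> 2 * (y^2 / X^2)"
    using divide_right_mono[of "s * m + s^2" "2 * y^2" "X^2"] by simp
  then have "(s * m + s^2) / X^2 * (block_gamma k + 1) \<le> 8 / real k^2 * (block_gamma k + 1)"
    unfolding y using block_gamma_pos[of k] by (intro mult_right_mono) auto
  moreover have "(X * P + m^2) / X^2 = P / X + m^2 / X^2" using assms(2) by (simp add: field_simps power2_eq_square)
  moreover have "4 / real k^2 + 8 / real k^2 * (block_gamma k + 1) = (12 + 128 * (real k + 2)) / real k ^ 2"
    using assms(1) unfolding block_gamma_def by (simp add: field_simps)
  moreover have "(s * m + s^2) * (block_gamma k + 1) / X^2 = (s * m + s^2) / X^2 * (block_gamma k + 1)"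
    by simp
  ultimately show ?thesis using assms(7,8) m by linarith
qed

lemma eventually_admissible:
  assumes "1 \<le> a"
  shows "eventually (admissible a) sequentially"
proof -
  have "eventually (\<lambda>k. real (size_bound a k) \<le> 2 * (2 ^ k / real k)) sequentially"
    using eventually_size_bound_le_pow2_div[OF assms] .
  moreover have "eventually (\<lambda>k::nat. (12 + 128 * (real k + 2)) / real k ^ 2 \<le> 1/8) sequentially"
    by real_asymp
  moreover have "eventually (\<lambda>k::nat. 1 \<le> k) sequentially" by (rule eventually_ge_at_top)
  moreover note eventually_weight_bound_le[OF assms]
  ultimately show ?thesis
  proof eventually_elim
    case (elim k)
    have "(2 ^ k * weight_bound a k + real (size_bound a k) ^ 2) / (2 ^ k) ^ 2
        + (real (block_size a k) * real (size_bound a k) + real (block_size a k) ^ 2) * (block_gamma k + 1)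
          / (2 ^ k) ^ 2 \<le> 1/4"
      using elim block_size_le[OF assms, of k]
      by (intro admissible_arith) (auto simp: divide_le_eq)
    then show ?case unfolding admissible_def by (simp add: real_pow2_sq)
  qed
qed

lemma eventually_card_stage_ge:
  assumes "1 \<le> a"
  shows "eventually (\<lambda>k. 2 ^ k / real k powr a \<le> 4 * real (card (stage a k))) sequentially"
proof -
  obtain K where K: "\<forall>k\<ge>K. target a k \<le> target a (Suc k) \<and> admissible a k"
    using eventually_conj[OF eventually_target_mono eventually_admissible[OF assms]]
    unfolding eventually_sequentially by blast
  have "eventually (\<lambda>k::nat. 2 + 2 * real (target a K) \<le> 2 ^ k / real k powr a) sequentially"
    by real_asymp
  moreover have "eventually (\<lambda>k. K \<le> k) sequentially" by (rule eventually_ge_at_top)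
  ultimately show ?thesis
  proof eventually_elim
    case (elim k)
    have "target a k \<le> 2 * card (stage a k) + target a K"
      using target_le_sum_added_size[OF K elim(2)] stage_invariant_stage[of a k]
      unfolding stage_invariant_def by linarith
    then have "real (target a k) \<le> real (2 * card (stage a k) + target a K)"
      by (simp only: of_nat_le_iff)
    then have "real (target a k) \<le> 2 * real (card (stage a k)) + real (target a K)"
      by simp
    then show ?case using elim(1) target_gt[of k a] by linarith
  qed
qed

lemma dyadic_vs_ln:
  assumes "2 ^ m \<le> n" "n \<le> 2 ^ Suc m" "1 \<le> m" "0 \<le> a"
  shows "ln 2 powr a * (real n / ln (real n) powr a) \<le> 2 * (2 ^ m / real m powr a)"
    and "2 ^ m / real (Suc m) powr a \<le> ln 2 powr a * (real n / ln (real n) powr a)"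
proof -
  have n: "2 ^ m \<le> real n" "real n \<le> 2 ^ Suc m"
    using assms(1,2) by (metis of_nat_le_iff of_nat_numeral of_nat_power)+
  then have "0 < real n" by (smt (verit) zero_less_power)
  have "ln ((2::real) ^ m) = real m * ln 2" "ln ((2::real) ^ Suc m) = real (Suc m) * ln 2"
    by (rule ln_realpow; simp)+
  moreover have "ln (2 ^ m) \<le> ln (real n)" "ln (real n) \<le> ln (2 ^ Suc m)"
    using n \<open>0 < real n\<close> by (subst ln_le_cancel_iff; simp)+
  ultimately have ln_n: "real m * ln 2 \<le> ln (real n)" "ln (real n) \<le> real (Suc m) * ln 2"
    by simp_all
  have pos: "0 < real m * ln 2" "0 < real m powr a" "0 < ln (2::real) powr a" using assms(3) by simp_all
  have "0 < ln (real n)" using ln_n(1) pos(1) by linarith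
  have "(real m * ln 2) powr a \<le> ln (real n) powr a"
    using ln_n(1) pos assms(4) by (intro powr_mono2) auto
  then have "real n / ln (real n) powr a \<le> 2 ^ Suc m / (real m powr a * ln 2 powr a)"
    using n pos by (intro frac_le) (auto simp: powr_mult)
  then show "ln 2 powr a * (real n / ln (real n) powr a) \<le> 2 * (2 ^ m / real m powr a)"
    using pos by (simp add: field_simps)
  have "ln (real n) powr a \<le> (real (Suc m) * ln 2) powr a"
    using ln_n \<open>0 < ln (real n)\<close> assms(4) by (intro powr_mono2) auto
  then have "2 ^ m / (real (Suc m) powr a * ln 2 powr a) \<le> real n / ln (real n) powr a"
    using n pos \<open>0 < ln (real n)\<close> by (intro frac_le) (auto simp: powr_mult)
  then show "2 ^ m / real (Suc m) powr a \<le> ln 2 powr a * (real n / ln (real n) powr a)"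
    using pos by (simp add: field_simps)
qed

lemma eventually_card_construction_grid_bounds:
  assumes "1 \<le> a"
  shows "eventually (\<lambda>n. ln 2 powr a / 8 * (real n / ln (real n) powr a)
      \<le> real (card (construction a \<inter> grid n))
    \<and> real (card (construction a \<inter> grid n)) \<le> 4 * ln 2 powr a * (real n / ln (real n) powr a))
    sequentially"
proof -
  obtain K where K: "\<And>k. K \<le> k \<Longrightarrow> 2 ^ k / real k powr a \<le> 4 * real (card (stage a k))
      \<and> real (size_bound a k) \<le> 2 * (2 ^ k / real k powr a)"
    using eventually_conj[OF eventually_card_stage_ge[OF assms] eventually_size_bound_le[of a]]
    unfolding eventually_sequentially by blast
  show ?thesis unfolding eventually_sequentially
  proof (intro exI allI impI)
    fix n :: nat assume n: "2 ^ Suc K \<le> n"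
    have "0 < (2::nat) ^ Suc K" by simp
    then have "1 \<le> n" using n by linarith
    then obtain m where m: "2 ^ m \<le> n" "n < 2 ^ Suc m"
      using ex_power_ivl1[of 2 n] by auto
    have "(2::nat) ^ Suc K < 2 ^ Suc m" using n m(2) by linarith
    then have mK: "K \<le> m" "K \<le> Suc m" "1 \<le> m" by simp_all
    define L where "L = ln 2 powr a * (real n / ln (real n) powr a)"
    note dyadic = dyadic_vs_ln[OF m(1) less_imp_le[OF m(2)] mK(3), of a, folded L_def]
    have "L / 8 \<le> (2 ^ m / real m powr a) / 4" using dyadic(1) assms by simp
    also have "\<dots> \<le> real (card (stage a m))" using K[OF mK(1)] by simp
    also have "\<dots> \<le> real (card (construction a \<inter> grid n))"
      using card_construction_grid_ge[OF m(1)] by simp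
    finally have lower: "L / 8 \<le> real (card (construction a \<inter> grid n))" .
    have "real (card (construction a \<inter> grid n)) \<le> real (size_bound a (Suc m))"
      using card_construction_grid_le[of n "Suc m"] m(2) by simp
    also have "\<dots> \<le> 4 * (2 ^ m / real (Suc m) powr a)" using K[OF mK(2)] by simp
    also have "\<dots> \<le> 4 * L" using dyadic(2) assms by simp
    finally show "ln 2 powr a / 8 * (real n / ln (real n) powr a) \<le> real (card (construction a \<inter> grid n))
      \<and> real (card (construction a \<inter> grid n)) \<le> 4 * ln 2 powr a * (real n / ln (real n) powr a)"
      using lower unfolding L_def by simp
  qed
qed

lemma bigtheta_liminf_pos_if_bounds:
  fixes f g :: "nat \<Rightarrow> real"
  assumes "0 < c1" "0 < c2" "eventually (\<lambda>n. 0 < g n \<and> c1 * g n \<le> f n \<and> f n \<le> c2 * g n) sequentially"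
  shows "f \<in> \<Theta>(g)" "0 < liminf (\<lambda>n. ereal (f n / g n))"
proof -
  have "eventually (\<lambda>n. c1 * norm (g n) \<le> norm (f n) \<and> norm (f n) \<le> c2 * norm (g n)) at_top"
    using assms(3)
  proof eventually_elim
    case (elim n)
    then have "0 < f n" using assms(1) by (smt (verit) mult_pos_pos)
    then show ?case using elim by simp
  qed
  then show "f \<in> \<Theta>(g)" using assms(1,2) by (intro bigthetaI')
  have "eventually (\<lambda>n. ereal c1 \<le> ereal (f n / g n)) sequentially"
    using assms(3) by eventually_elim (simp add: pos_le_divide_eq)
  then have "ereal c1 \<le> liminf (\<lambda>n. ereal (f n / g n))" by (rule Liminf_bounded)
  moreover have "(0::ereal) < ereal c1" using assms(1) by simp
  ultimately show "0 < liminf (\<lambda>n. ereal (f n / g n))" by (meson less_le_trans)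
qed

theorem theorem1p3:
  fixes \<epsilon> :: real
  assumes "\<epsilon> > 0"
  shows "\<exists>S :: (int \<times> int) set. general_position S \<and>
     (\<lambda>n::nat. real (card (S \<inter> grid n)))
        \<in> \<Theta>(\<lambda>n::nat. real n / ln (real n) powr (1 + \<epsilon>)) \<and>
     liminf (\<lambda>n::nat. ereal (real (card (S \<inter> grid n)) / (real n / ln (real n) powr (1 + \<epsilon>)))) > 0"
proof -
  have a: "1 \<le> 1 + \<epsilon>" using assms by simp
  have "eventually (\<lambda>n::nat. 0 < real n / ln (real n) powr (1 + \<epsilon>)) sequentially"
    by real_asymp
  then have ev: "eventually (\<lambda>n. 0 < real n / ln (real n) powr (1 + \<epsilon>)
      \<and> ln 2 powr (1 + \<epsilon>) / 8 * (real n / ln (real n) powr (1 + \<epsilon>))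
        \<le> real (card (construction (1 + \<epsilon>) \<inter> grid n))
      \<and> real (card (construction (1 + \<epsilon>) \<inter> grid n))
        \<le> 4 * ln 2 powr (1 + \<epsilon>) * (real n / ln (real n) powr (1 + \<epsilon>))) sequentially"
    using eventually_card_construction_grid_bounds[OF a] by eventually_elim blast
  have "0 < ln 2 powr (1 + \<epsilon>) / 8" "0 < 4 * ln 2 powr (1 + \<epsilon>)" by simp_all
  note bounds = bigtheta_liminf_pos_if_bounds[OF this ev]
  show ?thesis
  proof (intro exI conjI)
    show "general_position (construction (1 + \<epsilon>))"
      by (intro general_position_if_no_three_collinear no_three_collinear_construction)
  qed (use bounds in simp_all)
qed

end
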